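(* Let $\mu:[0,1)\to(0,\infty)$ be decreasing and continuous with $\lim_{r\to1^-}\mu(r)=0$, and suppose there is $B>0$ such that $\mu(1-d/2)\ge B\,\mu(1-d)$ for all $d\in(0,1]$. Let $u(z)=\operatorname{Re}\sum_k a_{n_k}z^{n_k}$ be a Hadamard gap series ($n_k$ positive integers, $n_{k+1}\ge\lambda n_k$, $\lambda>1$) converging in $\mathbb{D}$. Then $u\in\mathcal{B}_\mu$ if and only if there is $C$ such that $\sum_{n_k\le N}n_k|a_{n_k}|\le \dfrac{C}{\mu(1-1/N)}$ for all $N\in\mathbb{N}$.
   Context: The Bloch-type space $\mathcal{B}_\mu$ is the set of harmonic functions $u$ on the unit disk $\mathbb{D}$ with $\|u\|_{\mathcal{B}_\mu}=\sup_{z\in\mathbb{D}}\big(|u(0)|+\mu(|z|)\,|\nabla u(z)|\big)<\infty$. *)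

theory Defs
  imports "HOL-Analysis.Analysis"
begin

definition dx :: "(complex \<Rightarrow> real) \<Rightarrow> complex \<Rightarrow> real" where
  "dx u z = deriv (\<lambda>t::real. u (z + of_real t)) 0"

definition dy :: "(complex \<Rightarrow> real) \<Rightarrow> complex \<Rightarrow> real" where
  "dy u z = deriv (\<lambda>t::real. u (z + \<i> * of_real t)) 0"

definition grad_norm :: "(complex \<Rightarrow> real) \<Rightarrow> complex \<Rightarrow> real" where
  "grad_norm u z = sqrt ((dx u z)\<^sup>2 + (dy u z)\<^sup>2)"

definition harmonic_on :: "complex set \<Rightarrow> (complex \<Rightarrow> real) \<Rightarrow> bool" where
  "harmonic_on S u \<longleftrightarrow> open S \<and>
     (\<forall>z\<in>S. u differentiable at z \<and> dx u differentiable at z \<and> dy u differentiable at z) \<and>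
     continuous_on S (dx (dx u)) \<and> continuous_on S (dx (dy u)) \<and>
     continuous_on S (dy (dx u)) \<and> continuous_on S (dy (dy u)) \<and>
     (\<forall>z\<in>S. dx (dx u) z + dy (dy u) z = 0)"

definition bloch_type :: "(real \<Rightarrow> real) \<Rightarrow> (complex \<Rightarrow> real) \<Rightarrow> bool" where
  "bloch_type \<mu> u \<longleftrightarrow> harmonic_on (ball 0 1) u \<and>
     (\<exists>M. \<forall>z\<in>ball 0 1. \<bar>u 0\<bar> + \<mu> (norm z) * grad_norm u z \<le> M)"

end

theory Submission
  imports Defs "HOL-Complex_Analysis.Cauchy_Integral_Formula"
begin

(* Write F z = (\<Sum>k. a k * z ^ n k), so that u = Re F.  F is holomorphic in the unit disc, hence
   u is harmonic with |grad u| = |F'|; since u 0 = 0, u belongs to the Bloch-type space iff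
   \<mu>(|z|) * |F'(z)| is bounded on the disc (bloch_type_gap_series_iff).

   Necessity.  Hadamard gap sequences are Sidon sequences (hadamard_gap_sidon): the l1-norm of the
   coefficients of a trigonometric polynomial with gap frequencies is controlled by its sup-norm.
   This is proved one residue class of indices at a time with discrete Riesz products on the roots
   of unity.  Applied to z * F'(z) = (\<Sum>k. n k * a k * z ^ n k) on the circle |z| = r, with
   r = 1 - 1/N, it gives the coefficient condition.

   Sufficiency.  For r close to 1 let N0 be about 1 / (1 - r).  In \<Sum> n k * |a k| * r ^ (n k - 1)
   the frequencies below N0 are bounded by the hypothesis directly; above N0 the doubling condition
   makes 1 / \<mu>(1 - 1/x) grow only polynomially, which the decay of r ^ n k beats, and the gap
   condition makes \<Sum> 1 / n k geometric. *)

section \<open>Real parts of holomorphic functions\<close>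

lemma Re_scaled_has_derivative:
  assumes "(g has_field_derivative g') (at z)"
  shows "((\<lambda>w. Re (\<alpha> * g w)) has_derivative (\<lambda>v. Re (\<alpha> * (g' * v)))) (at z)"
proof -
  have "bounded_linear (\<lambda>x. Re (\<alpha> * x))"
    by (rule bounded_linear_compose[OF bounded_linear_Re bounded_linear_mult_right])
  from bounded_linear.has_derivative[OF this has_field_derivative_imp_has_derivative[OF assms]]
  show ?thesis .
qed

lemma partials_of_Re:
  assumes S: "open S" "z \<in> S" and h: "\<And>w. w \<in> S \<Longrightarrow> h w = Re (\<alpha> * g w)"
    and g: "(g has_field_derivative g') (at z)"
  shows "h differentiable at z" and "dx h z = Re (\<alpha> * g')" and "dy h z = Re (\<alpha> * \<i> * g')"
proof -
  have D: "(h has_derivative (\<lambda>v. Re (\<alpha> * (g' * v)))) (at z)"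
    by (rule has_derivative_transform_within_open[OF Re_scaled_has_derivative[OF g] S])
       (simp add: h)
  then show "h differentiable at z" by (rule differentiableI)
  have line: "deriv (\<lambda>t::real. h (z + \<beta> * of_real t)) 0 = Re (\<alpha> * \<beta> * g')" for \<beta>
  proof -
    have "((\<lambda>t::real. z + \<beta> * of_real t) has_derivative (\<lambda>t. \<beta> * of_real t)) (at 0)"
      by (auto intro!: derivative_eq_intros)
    moreover have "(h has_derivative (\<lambda>v. Re (\<alpha> * (g' * v)))) (at ((\<lambda>t::real. z + \<beta> * of_real t) 0))"
      using D by simp
    ultimately have "((\<lambda>t::real. h (z + \<beta> * of_real t)) has_derivative (\<lambda>t. Re (\<alpha> * (g' * (\<beta> * of_real t))))) (at 0)"
      using diff_chain_at unfolding o_def by blast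
    moreover have "(\<lambda>t::real. Re (\<alpha> * (g' * (\<beta> * of_real t)))) = (*) (Re (\<alpha> * \<beta> * g'))"
      by (auto simp: algebra_simps)
    ultimately show ?thesis
      by (intro DERIV_imp_deriv) (simp add: has_field_derivative_def)
  qed
  show "dx h z = Re (\<alpha> * g')" using line[of 1] by (simp add: dx_def)
  show "dy h z = Re (\<alpha> * \<i> * g')" using line[of \<i>] by (simp add: dy_def)
qed

lemma harmonic_Re_holomorphic:
  assumes S: "open S" and g: "g holomorphic_on S" and u: "\<And>w. w \<in> S \<Longrightarrow> u w = Re (g w)"
  shows "harmonic_on S u" and "\<And>w. w \<in> S \<Longrightarrow> grad_norm u w = norm (deriv g w)"
proof -
  define g1 where "g1 = deriv g"
  define g2 where "g2 = deriv g1"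
  have hol1: "g1 holomorphic_on S" and hol2: "g2 holomorphic_on S"
    unfolding g1_def g2_def using g S by (auto intro!: holomorphic_deriv)
  have d1: "(g has_field_derivative g1 w) (at w)" and d2: "(g1 has_field_derivative g2 w) (at w)"
    if "w \<in> S" for w
    using holomorphic_derivI[OF g S that] holomorphic_derivI[OF hol1 S that]
    by (simp_all add: g1_def g2_def)
  have u1: "\<And>w. w \<in> S \<Longrightarrow> u w = Re (1 * g w)" using u by simp
  have dxu: "\<And>w. w \<in> S \<Longrightarrow> dx u w = Re (1 * g1 w)"
    and dyu: "\<And>w. w \<in> S \<Longrightarrow> dy u w = Re (\<i> * g1 w)"
    using partials_of_Re[OF S _ u1 d1] by auto
  have dxx: "\<And>w. w \<in> S \<Longrightarrow> dx (dx u) w = Re (g2 w)"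
    and dyx: "\<And>w. w \<in> S \<Longrightarrow> dy (dx u) w = Re (\<i> * g2 w)"
    and dxy: "\<And>w. w \<in> S \<Longrightarrow> dx (dy u) w = Re (\<i> * g2 w)"
    and dyy: "\<And>w. w \<in> S \<Longrightarrow> dy (dy u) w = Re (\<i> * \<i> * g2 w)"
    using partials_of_Re[OF S _ dxu d2] partials_of_Re[OF S _ dyu d2] by auto
  have cont: "continuous_on S (\<lambda>w. Re (c * g2 w))" for c
    using holomorphic_on_imp_continuous_on[OF hol2] by (intro continuous_intros)
  show "harmonic_on S u"
    unfolding harmonic_on_def
  proof (intro conjI ballI)
    fix z assume z: "z \<in> S"
    show "u differentiable at z" by (rule partials_of_Re(1)[OF S z u1 d1[OF z]])
    show "dx u differentiable at z" by (rule partials_of_Re(1)[OF S z dxu d2[OF z]])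
    show "dy u differentiable at z" by (rule partials_of_Re(1)[OF S z dyu d2[OF z]])
    show "dx (dx u) z + dy (dy u) z = 0" using dxx[OF z] dyy[OF z] by simp
  next
    show "continuous_on S (dx (dx u))" by (rule continuous_on_eq[OF cont[of 1]]) (simp add: dxx)
    show "continuous_on S (dx (dy u))" by (rule continuous_on_eq[OF cont[of \<i>]]) (simp add: dxy)
    show "continuous_on S (dy (dx u))" by (rule continuous_on_eq[OF cont[of \<i>]]) (simp add: dyx)
    show "continuous_on S (dy (dy u))" by (rule continuous_on_eq[OF cont[of "\<i> * \<i>"]]) (simp add: dyy)
  qed (use S in simp)
  fix w assume "w \<in> S"
  then show "grad_norm u w = norm (deriv g w)"
    unfolding grad_norm_def dxu[OF \<open>w \<in> S\<close>] dyu[OF \<open>w \<in> S\<close>] g1_def by (simp add: cmod_def)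
qed

definition gap_coeffs :: "(nat \<Rightarrow> nat) \<Rightarrow> (nat \<Rightarrow> complex) \<Rightarrow> nat \<Rightarrow> complex" where
  "gap_coeffs n a m = (if m \<in> range n then a (inv n m) else 0)"

lemma gap_coeffs_at:
  assumes "strict_mono n"
  shows "gap_coeffs n a (n k) = a k"
  using strict_mono_imp_inj_on[OF assms] by (simp add: gap_coeffs_def inv_f_f)

lemma gap_series_as_powser:
  assumes sm: "strict_mono n" and conv: "summable (\<lambda>k. a k * z ^ n k)"
  shows "(\<lambda>m. gap_coeffs n a m * z ^ m) sums (\<Sum>k. a k * z ^ n k)"
proof -
  have "(\<lambda>k. gap_coeffs n a (n k) * z ^ n k) sums (\<Sum>k. a k * z ^ n k)"
    using conv by (simp add: gap_coeffs_at[OF sm] summable_sums)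
  then show ?thesis
    by (subst (asm) sums_mono_reindex[OF sm]) (simp_all add: gap_coeffs_def)
qed

text \<open>Reindexing a series along the shifted exponents n k - 1; used to read off the derivative of
  a gap series from the derivative of its power series.\<close>

lemma sums_reindex_pred_gap:
  fixes f :: "nat \<Rightarrow> 'a::real_normed_vector"
  assumes sm: "strict_mono n" and pos: "\<And>k. n k > 0"
    and zero: "\<And>m. Suc m \<notin> range n \<Longrightarrow> f m = 0"
  shows "(\<lambda>k. f (n k - 1)) sums s \<longleftrightarrow> f sums s"
proof (rule sums_mono_reindex)
  show "strict_mono (\<lambda>k. n k - 1)"
    unfolding strict_mono_def
  proof (intro allI impI)
    fix x y :: nat assume "x < y"
    then have "n x < n y" by (rule strict_monoD[OF sm])
    then show "n x - 1 < n y - 1" using pos[of x] by linarith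
  qed
  show "f m = 0" if "m \<notin> range (\<lambda>k. n k - 1)" for m
  proof (rule zero)
    show "Suc m \<notin> range n"
    proof
      assume "Suc m \<in> range n"
      then obtain k where "Suc m = n k" by auto
      then have "m = n k - 1" by simp
      with that show False by auto
    qed
  qed
qed

lemma diffs_gap_coeffs:
  assumes sm: "strict_mono n" and pos: "\<And>k. n k > 0"
  shows "diffs (gap_coeffs n a) (n k - 1) = of_nat (n k) * a k"
    and "Suc m \<notin> range n \<Longrightarrow> diffs (gap_coeffs n a) m = 0"
proof -
  show "diffs (gap_coeffs n a) (n k - 1) = of_nat (n k) * a k"
    using pos[of k] by (simp add: diffs_def gap_coeffs_at[OF sm])
  show "Suc m \<notin> range n \<Longrightarrow> diffs (gap_coeffs n a) m = 0"
    by (simp add: diffs_def gap_coeffs_def)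
qed

lemma gap_series_derivative_summable:
  fixes a :: "nat \<Rightarrow> complex"
  assumes sm: "strict_mono n" and pos: "\<And>k. n k > 0"
    and conv: "\<And>z. norm z < 1 \<Longrightarrow> summable (\<lambda>k. a k * z ^ n k)" and z: "norm z < 1"
  shows "summable (\<lambda>k. norm (of_nat (n k) * a k * z ^ (n k - 1)))"
proof -
  define c where "c = gap_coeffs n a"
  have "summable (\<lambda>m. c m * w ^ m)" if "norm w < 1" for w
    unfolding c_def using gap_series_as_powser[OF sm conv[OF that]] by (rule sums_summable)
  then have diffs_summable: "summable (\<lambda>m. diffs c m * w ^ m)" if "norm w < 1" for w
    by (rule termdiff_converges[OF that])
  define x where "x = complex_of_real ((1 + norm z) / 2)"
  have "norm x = (1 + norm z) / 2"
    unfolding x_def norm_of_real by simp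
  then have x: "norm x < 1" "norm z < norm x" using z by auto
  have "summable (\<lambda>m. norm (diffs c m * z ^ m))"
    by (rule powser_insidea[OF diffs_summable[OF x(1)] x(2)])
  then have "(\<lambda>k. norm (diffs c (n k - 1) * z ^ (n k - 1))) sums (\<Sum>m. norm (diffs c m * z ^ m))"
    using diffs_gap_coeffs(2)[OF sm pos] unfolding c_def
    by (subst sums_reindex_pred_gap[OF sm pos]) (auto simp: summable_sums)
  then show ?thesis
    unfolding c_def diffs_gap_coeffs(1)[OF sm pos] by (rule sums_summable)
qed

lemma gap_series_derivative:
  fixes a :: "nat \<Rightarrow> complex"
  assumes sm: "strict_mono n" and pos: "\<And>k. n k > 0"
    and conv: "\<And>z. norm z < 1 \<Longrightarrow> summable (\<lambda>k. a k * z ^ n k)" and z: "norm z < 1"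
  shows "((\<lambda>z. \<Sum>k. a k * z ^ n k) has_field_derivative
           (\<Sum>k. of_nat (n k) * a k * z ^ (n k - 1))) (at z)"
proof -
  define c where "c = gap_coeffs n a"
  have powser: "(\<lambda>m. c m * w ^ m) sums (\<Sum>k. a k * w ^ n k)" if "norm w < 1" for w
    unfolding c_def using conv[OF that] by (rule gap_series_as_powser[OF sm])
  have c_summable: "\<And>w. norm w < 1 \<Longrightarrow> summable (\<lambda>m. c m * w ^ m)"
    using powser sums_summable by blast
  have "(\<lambda>k. diffs c (n k - 1) * z ^ (n k - 1)) sums (\<Sum>m. diffs c m * z ^ m)"
    using termdiff_converges[OF z c_summable] diffs_gap_coeffs(2)[OF sm pos] unfolding c_def
    by (subst sums_reindex_pred_gap[OF sm pos]) (auto simp: summable_sums)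
  then have "(\<lambda>k. of_nat (n k) * a k * z ^ (n k - 1)) sums (\<Sum>m. diffs c m * z ^ m)"
    unfolding c_def by (simp only: diffs_gap_coeffs(1)[OF sm pos])
  then have deriv_eq: "(\<Sum>m. diffs c m * z ^ m) = (\<Sum>k. of_nat (n k) * a k * z ^ (n k - 1))"
    by (rule sums_unique)
  have "((\<lambda>w. \<Sum>m. c m * w ^ m) has_field_derivative (\<Sum>m. diffs c m * z ^ m)) (at z)"
    by (rule termdiffs_strong'[OF c_summable z])
  then show ?thesis
    unfolding deriv_eq
    by (rule has_field_derivative_transform_within_open[where S="ball 0 1"])
       (use z in \<open>auto simp: sums_unique[OF powser]\<close>)
qed

text \<open>Since u is the real part of the holomorphic gap series, membership in the Bloch-type space
  is a weighted bound on the derivative series (the term \<bar>u 0\<bar> vanishes since all n k > 0).\<close>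

lemma bloch_type_gap_series_iff:
  fixes a :: "nat \<Rightarrow> complex"
  assumes sm: "strict_mono n" and pos: "\<And>k. n k > 0"
    and conv: "\<And>z. norm z < 1 \<Longrightarrow> summable (\<lambda>k. a k * z ^ n k)"
    and u: "\<And>z. u z = Re (\<Sum>k. a k * z ^ n k)"
  shows "bloch_type \<mu> u \<longleftrightarrow>
    (\<exists>M. \<forall>z. norm z < 1 \<longrightarrow> \<mu> (norm z) * norm (\<Sum>k. of_nat (n k) * a k * z ^ (n k - 1)) \<le> M)"
proof -
  define F where "F = (\<lambda>z. \<Sum>k. a k * z ^ n k)"
  have D: "(F has_field_derivative (\<Sum>k. of_nat (n k) * a k * z ^ (n k - 1))) (at z)"
    if "z \<in> ball 0 1" for z
    using gap_series_derivative[OF sm pos conv] that by (simp add: F_def)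
  have hol: "F holomorphic_on ball 0 1"
    unfolding holomorphic_on_open[OF open_ball] using D by blast
  have grad: "grad_norm u z = norm (\<Sum>k. of_nat (n k) * a k * z ^ (n k - 1))" if "z \<in> ball 0 1" for z
    using harmonic_Re_holomorphic(2)[OF _ hol _ that] D[OF that] by (simp add: u F_def DERIV_imp_deriv)
  have "a k * 0 ^ n k = 0" for k
    using pos[of k] by (simp add: zero_power)
  then have "u 0 = 0"
    by (simp only: u suminf_zero) simp
  then have "(\<forall>z\<in>ball 0 1. \<bar>u 0\<bar> + \<mu> (norm z) * grad_norm u z \<le> M) \<longleftrightarrow>
    (\<forall>z. norm z < 1 \<longrightarrow> \<mu> (norm z) * norm (\<Sum>k. of_nat (n k) * a k * z ^ (n k - 1)) \<le> M)" for M
    using grad by auto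
  moreover have "harmonic_on (ball 0 1) u"
    using harmonic_Re_holomorphic(1)[OF open_ball hol] by (simp add: u F_def)
  ultimately show ?thesis
    unfolding bloch_type_def by simp
qed

definition hadamard_gap :: "real \<Rightarrow> (nat \<Rightarrow> nat) \<Rightarrow> bool" where
  "hadamard_gap lam n \<longleftrightarrow> lam > 1 \<and> (\<forall>k. n k > 0) \<and> (\<forall>k. real (n (Suc k)) \<ge> lam * real (n k))"

lemma hadamard_gapD:
  assumes "hadamard_gap lam n"
  shows "lam > 1" and "n k > 0" and "real (n (Suc k)) \<ge> lam * real (n k)"
  using assms by (auto simp: hadamard_gap_def)

lemma hadamard_gap_strict_mono:
  assumes "hadamard_gap lam n"
  shows "strict_mono n"
  unfolding strict_mono_Suc_iff
proof
  fix k
  have "real (n k) < lam * real (n k)" using hadamard_gapD(1,2)[OF assms] by simp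
  then show "n k < n (Suc k)" using hadamard_gapD(3)[OF assms, of k] by linarith
qed

lemma gap_power_growth:
  assumes gap: "hadamard_gap lam n"
  shows "real (n (k + d)) \<ge> lam ^ d * real (n k)"
proof (induction d)
  case (Suc d)
  have "lam ^ Suc d * real (n k) = lam * (lam ^ d * real (n k))" by simp
  also have "\<dots> \<le> lam * real (n (k + d))" using Suc hadamard_gapD(1)[OF gap] by (intro mult_left_mono) auto
  also have "\<dots> \<le> real (n (k + Suc d))" using hadamard_gapD(3)[OF gap, of "k + d"] by simp
  finally show ?case .
qed simp

lemma gap_growth_less:
  assumes gap: "hadamard_gap lam n" and "l < l'"
  shows "real (n l') \<ge> lam * real (n l)"
proof -
  obtain d where d: "l' = Suc l + d" using \<open>l < l'\<close> less_iff_Suc_add by auto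
  have "real (n (Suc l)) \<le> lam ^ d * real (n (Suc l))"
    using hadamard_gapD(1,2)[OF gap] by (simp add: mult_le_cancel_right1)
  also have "\<dots> \<le> real (n l')" unfolding d by (rule gap_power_growth[OF gap])
  finally show ?thesis using hadamard_gapD(3)[OF gap, of l] by simp
qed

lemma finite_frequencies_below:
  assumes "strict_mono (n :: nat \<Rightarrow> nat)"
  shows "finite {k. n k \<le> N}"
proof (rule finite_subset)
  show "{k. n k \<le> N} \<subseteq> {..N}"
    using strict_mono_imp_increasing[OF assms] by (auto intro: le_trans)
qed simp

section \<open>Discrete Riesz products\<close>

definition eroot :: "nat \<Rightarrow> int \<Rightarrow> nat \<Rightarrow> complex" where
  "eroot M k s = exp (2 * of_real pi * \<i> * of_int k * of_nat s / of_nat M)"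

lemma eroot_add: "eroot M (k + l) s = eroot M k s * eroot M l s"
  unfolding eroot_def by (simp add: exp_add[symmetric] algebra_simps add_divide_distrib)

lemma eroot_cnj: "cnj (eroot M k s) = eroot M (- k) s"
  unfolding eroot_def by (simp add: exp_cnj)

lemma norm_eroot: "norm (eroot M k s) = 1"
  unfolding eroot_def by simp

lemma eroot_zero [simp]: "eroot M 0 s = 1"
  unfolding eroot_def by simp

lemma eroot_eq_exp_power: "eroot M (int m) s = exp (\<i> * of_real (2 * pi * real s / real M)) ^ m"
proof -
  have "eroot M (int m) s = exp (of_nat m * (\<i> * of_real (2 * pi * real s / real M)))"
    unfolding eroot_def by (simp add: algebra_simps)
  then show ?thesis by (simp only: exp_of_nat_mult)
qed

lemma sum_eroot:
  assumes M: "M > 0" and k: "\<bar>k\<bar> < int M"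
  shows "(\<Sum>s<M. eroot M k s) = (if k = 0 then of_nat M else 0)"
proof (cases "k = 0")
  case False
  define w where "w = exp (2 * of_real pi * \<i> * of_int k / of_nat M)"
  have pw: "eroot M k s = w ^ s" for s
    unfolding eroot_def w_def by (simp add: exp_of_nat_mult[symmetric] algebra_simps)
  have "w \<noteq> 1"
  proof
    assume "w = 1"
    then obtain j :: int where "2 * pi * of_int k / of_nat M = of_int (2 * j) * pi"
      unfolding w_def exp_eq_1 by auto
    then have "of_int k = (of_int (j * int M) :: real)" using M by (simp add: field_simps)
    then have kj: "k = j * int M" by linarith
    with False have "j \<noteq> 0" by auto
    then have "int M \<le> \<bar>j\<bar> * int M" by (simp add: mult_le_cancel_right1 int_one_le_iff_zero_less)
    with k kj show False by (simp add: abs_mult)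
  qed
  moreover have "w ^ M = 1"
  proof -
    have "w ^ M = exp (of_nat M * (2 * of_real pi * \<i> * of_int k / of_nat M))"
      unfolding w_def by (simp only: exp_of_nat_mult[symmetric])
    also have "\<dots> = 1" using M by (simp add: exp_eq_1)
    finally show ?thesis .
  qed
  ultimately show ?thesis using False by (simp add: pw geometric_sum)
qed simp

text \<open>The discrete Riesz product \<Prod>i\<in>I. (1 + Re (\<sigma> i * e(\<nu> i s))), a nonnegative weight on the
  M-th roots of unity, and its Fourier coefficients.\<close>

definition riesz_product :: "nat \<Rightarrow> (nat \<Rightarrow> int) \<Rightarrow> (nat \<Rightarrow> complex) \<Rightarrow> nat set \<Rightarrow> nat \<Rightarrow> real" where
  "riesz_product M \<nu> \<sigma> I s = (\<Prod>i\<in>I. 1 + Re (\<sigma> i * eroot M (\<nu> i) s))"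

definition riesz_coeff :: "nat \<Rightarrow> (nat \<Rightarrow> int) \<Rightarrow> (nat \<Rightarrow> complex) \<Rightarrow> nat set \<Rightarrow> int \<Rightarrow> complex" where
  "riesz_coeff M \<nu> \<sigma> I k = (\<Sum>s<M. eroot M k s * of_real (riesz_product M \<nu> \<sigma> I s))"

lemma riesz_product_nonneg:
  assumes "\<And>i. norm (\<sigma> i) \<le> 1"
  shows "riesz_product M \<nu> \<sigma> I s \<ge> 0"
  unfolding riesz_product_def
proof (rule prod_nonneg)
  fix i
  have "\<bar>Re (\<sigma> i * eroot M (\<nu> i) s)\<bar> \<le> norm (\<sigma> i * eroot M (\<nu> i) s)" by (rule abs_Re_le_cmod)
  also have "\<dots> \<le> 1" using assms[of i] by (simp add: norm_mult norm_eroot)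
  finally show "0 \<le> 1 + Re (\<sigma> i * eroot M (\<nu> i) s)" by linarith
qed

lemma riesz_coeff_empty: "riesz_coeff M \<nu> \<sigma> {} k = (\<Sum>s<M. eroot M k s)"
  by (simp add: riesz_coeff_def riesz_product_def)

lemma riesz_coeff_insert:
  assumes "finite I" "i0 \<notin> I"
  shows "riesz_coeff M \<nu> \<sigma> (insert i0 I) k = riesz_coeff M \<nu> \<sigma> I k
          + \<sigma> i0 / 2 * riesz_coeff M \<nu> \<sigma> I (k + \<nu> i0)
          + cnj (\<sigma> i0) / 2 * riesz_coeff M \<nu> \<sigma> I (k - \<nu> i0)"
proof -
  have "eroot M k s * of_real (riesz_product M \<nu> \<sigma> (insert i0 I) s)
      = eroot M k s * of_real (riesz_product M \<nu> \<sigma> I s)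
      + \<sigma> i0 / 2 * (eroot M (k + \<nu> i0) s * of_real (riesz_product M \<nu> \<sigma> I s))
      + cnj (\<sigma> i0) / 2 * (eroot M (k - \<nu> i0) s * of_real (riesz_product M \<nu> \<sigma> I s))" for s
  proof -
    define w where "w = \<sigma> i0 * eroot M (\<nu> i0) s"
    define P where "P = complex_of_real (riesz_product M \<nu> \<sigma> I s)"
    have "riesz_product M \<nu> \<sigma> (insert i0 I) s = (1 + Re w) * riesz_product M \<nu> \<sigma> I s"
      using assms by (simp add: riesz_product_def w_def)
    then have "of_real (riesz_product M \<nu> \<sigma> (insert i0 I) s) = (1 + (w + cnj w) / 2) * P"
      by (simp add: P_def complex_add_cnj)
    moreover have "eroot M k s * w = \<sigma> i0 * eroot M (k + \<nu> i0) s"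
      and "eroot M k s * cnj w = cnj (\<sigma> i0) * eroot M (k - \<nu> i0) s"
      using eroot_add[of M k "- \<nu> i0"] by (simp_all add: w_def eroot_cnj eroot_add[of M k])
    ultimately show ?thesis
      unfolding P_def[symmetric] by (simp add: algebra_simps add_divide_distrib)
  qed
  then show ?thesis
    unfolding riesz_coeff_def by (simp add: sum.distrib sum_distrib_left)
qed

text \<open>The spectrum of the Riesz product: all sums \<Sum>i\<in>I. \<epsilon> i * \<nu> i with \<epsilon> i \<in> {-1, 0, 1}.\<close>

definition signed_sums :: "(nat \<Rightarrow> int) \<Rightarrow> nat set \<Rightarrow> int set" where
  "signed_sums \<nu> I = {k. \<exists>\<epsilon>. (\<forall>i. \<epsilon> i \<in> {-1, 0, 1}) \<and> k = (\<Sum>i\<in>I. \<epsilon> i * \<nu> i)}"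

lemma zero_in_signed_sums: "0 \<in> signed_sums \<nu> I"
  unfolding signed_sums_def by (rule CollectI, rule exI[of _ "\<lambda>_. 0"]) simp

lemma signed_sums_bound:
  assumes nonneg: "\<And>i. \<nu> i \<ge> 0" and k: "k \<in> signed_sums \<nu> I"
  shows "\<bar>k\<bar> \<le> (\<Sum>i\<in>I. \<nu> i)"
proof -
  obtain \<epsilon> where \<epsilon>: "\<forall>i. \<epsilon> i \<in> {-1, 0, 1}" and k_eq: "k = (\<Sum>i\<in>I. \<epsilon> i * \<nu> i)"
    using k unfolding signed_sums_def by blast
  have "\<bar>k\<bar> \<le> (\<Sum>i\<in>I. \<bar>\<epsilon> i * \<nu> i\<bar>)" unfolding k_eq by (rule sum_abs)
  also have "\<dots> \<le> (\<Sum>i\<in>I. \<nu> i)"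
  proof (rule sum_mono)
    fix i
    have "\<epsilon> i \<in> {-1, 0, 1}" using \<epsilon> by blast
    then show "\<bar>\<epsilon> i * \<nu> i\<bar> \<le> \<nu> i" using nonneg[of i] by (auto simp: abs_mult)
  qed
  finally show ?thesis .
qed

lemma signed_sums_insert:
  assumes "finite I" "i0 \<notin> I" and c: "c \<in> {-1, 0, 1}" and k: "k + c * \<nu> i0 \<in> signed_sums \<nu> I"
  shows "k \<in> signed_sums \<nu> (insert i0 I)"
proof -
  obtain \<epsilon> where \<epsilon>: "\<forall>i. \<epsilon> i \<in> {-1, 0, 1}" and k_eq: "k + c * \<nu> i0 = (\<Sum>i\<in>I. \<epsilon> i * \<nu> i)"
    using k unfolding signed_sums_def by blast
  define \<epsilon>' where "\<epsilon>' = \<epsilon>(i0 := - c)"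
  have "(\<Sum>i\<in>I. \<epsilon>' i * \<nu> i) = (\<Sum>i\<in>I. \<epsilon> i * \<nu> i)"
    using assms(2) unfolding \<epsilon>'_def by (intro sum.cong) auto
  then have "k = (\<Sum>i\<in>insert i0 I. \<epsilon>' i * \<nu> i)"
    using assms(1,2) k_eq by (simp add: \<epsilon>'_def)
  moreover have "\<forall>i. \<epsilon>' i \<in> {-1, 0, 1}" using \<epsilon> c by (auto simp: \<epsilon>'_def)
  ultimately show ?thesis unfolding signed_sums_def by blast
qed

definition lacunary :: "real \<Rightarrow> (nat \<Rightarrow> int) \<Rightarrow> bool" where
  "lacunary Q \<nu> \<longleftrightarrow> (\<forall>i. \<nu> i > 0 \<and> real_of_int (\<nu> (Suc i)) \<ge> Q * real_of_int (\<nu> i))"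

lemma lacunary_sum_before:
  assumes lac: "lacunary Q \<nu>" and Q: "Q > 1"
  shows "(\<Sum>i<i0. real_of_int (\<nu> i)) \<le> \<nu> i0 / (Q - 1)"
proof (induction i0)
  case 0 then show ?case using lac Q by (simp add: lacunary_def less_imp_le)
next
  case (Suc i0)
  have "(\<Sum>i<Suc i0. real_of_int (\<nu> i)) \<le> \<nu> i0 / (Q - 1) + \<nu> i0" using Suc by simp
  also have "\<dots> = Q * \<nu> i0 / (Q - 1)" using Q by (simp add: field_simps)
  also have "\<dots> \<le> \<nu> (Suc i0) / (Q - 1)" using lac Q by (simp add: lacunary_def divide_right_mono)
  finally show ?case .
qed

lemma lacunary_sum_below_half:
  assumes lac: "lacunary Q \<nu>" and Q: "Q > 3" and I: "\<forall>i\<in>I. i < i0"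
  shows "2 * (\<Sum>i\<in>I. \<nu> i) < \<nu> i0"
proof -
  have pos: "\<And>i. \<nu> i > 0" using lac by (simp add: lacunary_def)
  have "real_of_int (\<Sum>i\<in>I. \<nu> i) = (\<Sum>i\<in>I. real_of_int (\<nu> i))" by simp
  also have "\<dots> \<le> (\<Sum>i<i0. real_of_int (\<nu> i))"
    using I pos by (intro sum_mono2) (auto simp: less_imp_le)
  also have "\<dots> \<le> \<nu> i0 / (Q - 1)" using lacunary_sum_before[OF lac] Q by simp
  finally have "2 * real_of_int (\<Sum>i\<in>I. \<nu> i) \<le> 2 * (\<nu> i0 / (Q - 1))" by simp
  also have "\<dots> < \<nu> i0" using Q pos[of i0] by (simp add: field_simps)
  finally show ?thesis by linarith
qed

text \<open>The Fourier coefficients of the Riesz product vanish off the spectrum (no aliasing as long as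
  all frequencies stay below M).\<close>

lemma riesz_coeff_off_spectrum:
  assumes "finite I" and nonneg: "\<And>i. \<nu> i \<ge> 0" and M: "M > 0"
    and "\<bar>k\<bar> + (\<Sum>i\<in>I. \<nu> i) < int M" and "k \<notin> signed_sums \<nu> I"
  shows "riesz_coeff M \<nu> \<sigma> I k = 0"
  using assms(1,4,5)
proof (induction I arbitrary: k rule: finite_induct)
  case empty
  then have "k \<noteq> 0" using zero_in_signed_sums by metis
  with empty M show ?case by (simp add: riesz_coeff_empty sum_eroot)
next
  case (insert i0 I)
  note ins = signed_sums_insert[OF insert(1,2)]
  have "k \<notin> signed_sums \<nu> I" "k + \<nu> i0 \<notin> signed_sums \<nu> I" "k - \<nu> i0 \<notin> signed_sums \<nu> I"
    using ins[of 0 k] ins[of 1 k] ins[of "-1" k] insert(5) by auto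
  moreover have "\<bar>k\<bar> + (\<Sum>i\<in>I. \<nu> i) < int M" "\<bar>k + \<nu> i0\<bar> + (\<Sum>i\<in>I. \<nu> i) < int M"
    "\<bar>k - \<nu> i0\<bar> + (\<Sum>i\<in>I. \<nu> i) < int M"
    using insert(1,2,4) nonneg[of i0] by auto
  ultimately show ?case
    using insert.IH by (simp add: riesz_coeff_insert[OF insert(1,2)])
qed

text \<open>For lacunary frequencies the Riesz product has mean one ...\<close>

lemma riesz_coeff_zero:
  assumes lac: "lacunary Q \<nu>" and Q: "Q > 3" and "finite I" and "(\<Sum>i\<in>I. \<nu> i) < int M"
  shows "riesz_coeff M \<nu> \<sigma> I 0 = of_nat M"
  using assms(3,4)
proof (induction I rule: finite_linorder_max_induct)
  case empty
  then show ?case by (simp add: riesz_coeff_empty)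
next
  case (insert i0 I)
  have nonneg: "\<And>i. \<nu> i \<ge> 0" using lac by (simp add: lacunary_def less_imp_le)
  have fin: "finite I" and notin: "i0 \<notin> I" using insert by auto
  have sum_insert: "(\<Sum>i\<in>insert i0 I. \<nu> i) = \<nu> i0 + (\<Sum>i\<in>I. \<nu> i)" using fin notin by simp
  have sum_I: "0 \<le> (\<Sum>i\<in>I. \<nu> i)" using nonneg by (simp add: sum_nonneg)
  have small: "(\<Sum>i\<in>I. \<nu> i) < \<nu> i0"
    using lacunary_sum_below_half[OF lac Q] insert(2) sum_I by force
  have M: "M > 0" using insert(4) sum_insert sum_I nonneg[of i0] by linarith
  have "\<nu> i0 \<notin> signed_sums \<nu> I" "- \<nu> i0 \<notin> signed_sums \<nu> I"
    using small signed_sums_bound[OF nonneg] by force+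
  moreover have "\<bar>\<nu> i0\<bar> + (\<Sum>i\<in>I. \<nu> i) < int M" "\<bar>- \<nu> i0\<bar> + (\<Sum>i\<in>I. \<nu> i) < int M"
    using insert(4) sum_insert nonneg[of i0] by auto
  ultimately have "riesz_coeff M \<nu> \<sigma> I (\<nu> i0) = 0" "riesz_coeff M \<nu> \<sigma> I (- \<nu> i0) = 0"
    using riesz_coeff_off_spectrum[where \<nu>=\<nu>, OF fin nonneg M] by blast+
  moreover have "riesz_coeff M \<nu> \<sigma> I 0 = of_nat M"
    using insert(3,4) sum_insert nonneg[of i0] by simp
  ultimately show ?case
    by (simp add: riesz_coeff_insert[OF fin notin])
qed

text \<open>... and its coefficient at each frequency \<nu> i is cnj (\<sigma> i) / 2, because the representations
  of 0 and of \<nu> i as signed sums are unique.\<close>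

lemma riesz_coeff_frequency:
  assumes lac: "lacunary Q \<nu>" and Q: "Q > 3" and "finite I" and "i \<in> I"
    and "\<nu> i + (\<Sum>j\<in>I. \<nu> j) < int M"
  shows "riesz_coeff M \<nu> \<sigma> I (\<nu> i) = of_nat M * cnj (\<sigma> i) / 2"
  using assms(3-5)
proof (induction I rule: finite_linorder_max_induct)
  case empty
  then show ?case by simp
next
  case (insert i0 I)
  have nonneg: "\<And>j. \<nu> j \<ge> 0" using lac by (simp add: lacunary_def less_imp_le)
  have fin: "finite I" and notin: "i0 \<notin> I" using insert by auto
  have sum_insert: "(\<Sum>j\<in>insert i0 I. \<nu> j) = \<nu> i0 + (\<Sum>j\<in>I. \<nu> j)" using fin notin by simp
  have sum_I: "0 \<le> (\<Sum>j\<in>I. \<nu> j)" using nonneg by (simp add: sum_nonneg)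
  have small: "2 * (\<Sum>j\<in>I. \<nu> j) < \<nu> i0"
    using lacunary_sum_below_half[OF lac Q] insert(2) by blast
  have M: "M > 0" using insert(5) sum_insert sum_I nonneg[of i0] nonneg[of i] by linarith
  have off: "riesz_coeff M \<nu> \<sigma> I k = 0"
    if "(\<Sum>j\<in>I. \<nu> j) < \<bar>k\<bar>" "\<bar>k\<bar> + (\<Sum>j\<in>I. \<nu> j) < int M" for k
  proof (rule riesz_coeff_off_spectrum[OF fin nonneg M that(2)])
    show "k \<notin> signed_sums \<nu> I" using signed_sums_bound[OF nonneg] that(1) by force
  qed
  show ?case
  proof (cases "i = i0")
    case True
    have "riesz_coeff M \<nu> \<sigma> I 0 = of_nat M"
      using riesz_coeff_zero[OF lac Q fin] insert(5) sum_insert nonneg[of i0] True by simp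
    moreover have "riesz_coeff M \<nu> \<sigma> I (\<nu> i0) = 0" "riesz_coeff M \<nu> \<sigma> I (\<nu> i0 + \<nu> i0) = 0"
      using off[of "\<nu> i0"] off[of "\<nu> i0 + \<nu> i0"] small insert(5) sum_insert sum_I True by auto
    ultimately show ?thesis
      using True by (simp add: riesz_coeff_insert[OF fin notin])
  next
    case False
    then have "i \<in> I" using insert(4) by simp
    then have le: "\<nu> i \<le> (\<Sum>j\<in>I. \<nu> j)" using fin nonneg by (intro member_le_sum) auto
    have "riesz_coeff M \<nu> \<sigma> I (\<nu> i) = of_nat M * cnj (\<sigma> i) / 2"
      using insert.IH[OF \<open>i \<in> I\<close>] insert(5) sum_insert nonneg[of i0] by simp
    moreover have "riesz_coeff M \<nu> \<sigma> I (\<nu> i + \<nu> i0) = 0" "riesz_coeff M \<nu> \<sigma> I (\<nu> i - \<nu> i0) = 0"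
      using off[of "\<nu> i + \<nu> i0"] off[of "\<nu> i - \<nu> i0"] small le insert(5) sum_insert
        nonneg[of i] nonneg[of i0] by auto
    ultimately show ?thesis
      by (simp add: riesz_coeff_insert[OF fin notin])
  qed
qed

lemma gap_subsequence_lacunary:
  assumes gap: "hadamard_gap lam n"
  shows "lacunary (lam ^ m) (\<lambda>i. int (n (j + m * i)))"
  unfolding lacunary_def
proof (intro allI conjI)
  fix i
  show "int (n (j + m * i)) > 0" using hadamard_gapD(2)[OF gap] by simp
  have "real (n ((j + m * i) + m)) \<ge> lam ^ m * real (n (j + m * i))"
    by (rule gap_power_growth[OF gap])
  then show "real_of_int (int (n (j + m * Suc i))) \<ge> lam ^ m * real_of_int (int (n (j + m * i)))"
    by (simp add: algebra_simps)
qed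

lemma gap_index_from_closeness:
  assumes gap: "hadamard_gap lam n"
    and \<delta>: "\<delta> < lam - 1" "\<delta> < 1 - 1 / lam"
    and close: "\<bar>real (n l) - real (n K)\<bar> \<le> \<delta> * real (n K)"
  shows "l = K"
proof (rule ccontr)
  assume "l \<noteq> K"
  have nK: "real (n K) > 0" using hadamard_gapD(2)[OF gap] by simp
  have lam: "lam > 1" using hadamard_gapD(1)[OF gap] .
  consider "K < l" | "l < K" using \<open>l \<noteq> K\<close> by linarith
  then show False
  proof cases
    case 1
    have "(1 + \<delta>) * real (n K) < lam * real (n K)" using \<delta> nK by simp
    also have "\<dots> \<le> real (n l)" by (rule gap_growth_less[OF gap 1])
    finally show False using close by (simp add: algebra_simps)
  next
    case 2
    have "lam * real (n l) \<le> real (n K)" by (rule gap_growth_less[OF gap 2])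
    then have "real (n l) \<le> (1 / lam) * real (n K)" using lam by (simp add: field_simps)
    also have "\<dots> < (1 - \<delta>) * real (n K)" using \<delta> nK by (intro mult_strict_right_mono) auto
    finally show False using close by (simp add: algebra_simps)
  qed
qed

lemma lacunary_dominant_term:
  assumes lac: "lacunary Q \<nu>" and Q: "Q > 2" and fin: "finite I"
    and \<epsilon>: "\<forall>i. \<epsilon> i \<in> {-1, 0, 1}" and k: "k = (\<Sum>i\<in>I. \<epsilon> i * \<nu> i)" "k > 0"
  shows "\<exists>i0\<in>I. \<bar>real_of_int k - \<nu> i0\<bar> \<le> \<nu> i0 / (Q - 1)"
proof -
  have pos: "\<And>i. \<nu> i > 0" using lac by (simp add: lacunary_def)
  define J where "J = {i\<in>I. \<epsilon> i \<noteq> 0}"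
  have finJ: "finite J" using fin by (simp add: J_def)
  have k_J: "k = (\<Sum>i\<in>J. \<epsilon> i * \<nu> i)"
    unfolding k J_def using fin by (intro sum.mono_neutral_right) auto
  then have "J \<noteq> {}" using k(2) by auto
  define i0 where "i0 = Max J"
  have i0J: "i0 \<in> J" using finJ \<open>J \<noteq> {}\<close> by (simp add: i0_def)
  have below: "\<And>i. i \<in> J - {i0} \<Longrightarrow> i < i0"
    using Max_ge[OF finJ] unfolding i0_def by fastforce
  define R where "R = (\<Sum>i\<in>J - {i0}. \<epsilon> i * \<nu> i)"
  have k_split: "k = \<epsilon> i0 * \<nu> i0 + R"
    unfolding R_def k_J using finJ i0J by (simp add: sum.remove)
  have "R \<in> signed_sums \<nu> (J - {i0})"
    unfolding signed_sums_def R_def using \<epsilon> by blast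
  then have "\<bar>R\<bar> \<le> (\<Sum>i\<in>J - {i0}. \<nu> i)"
    using signed_sums_bound pos less_imp_le by blast
  then have "real_of_int \<bar>R\<bar> \<le> real_of_int (\<Sum>i\<in>J - {i0}. \<nu> i)"
    by (simp only: of_int_le_iff)
  also have "\<dots> \<le> (\<Sum>i<i0. real_of_int (\<nu> i))"
    using below pos by (simp, intro sum_mono2) (auto simp: less_imp_le)
  also have "\<dots> \<le> \<nu> i0 / (Q - 1)" using lacunary_sum_before[OF lac] Q by simp
  finally have R: "\<bar>real_of_int R\<bar> \<le> \<nu> i0 / (Q - 1)" by simp
  have "\<epsilon> i0 = 1"
  proof -
    have "\<epsilon> i0 \<in> {-1, 1}" using \<epsilon> i0J unfolding J_def by auto
    moreover have "\<nu> i0 / (Q - 1) < \<nu> i0" using Q pos[of i0] by (simp add: field_simps)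
    ultimately show ?thesis using k_split R k(2) by auto
  qed
  then show ?thesis using k_split R i0J by (intro bexI[of _ i0]) (auto simp: J_def)
qed

text \<open>If lam ^ m is large, a frequency n l in the spectrum of the subsequence n (j + m * i) is itself
  one of its terms: the Riesz product built on one residue class does not see the other classes.\<close>

lemma signed_sum_of_gap_subsequence:
  assumes gap: "hadamard_gap lam n" and Q_big: "lam ^ m > 3 + 1 / (lam - 1)" and fin: "finite I"
    and l: "int (n l) \<in> signed_sums (\<lambda>i. int (n (j + m * i))) I"
  shows "\<exists>i\<in>I. l = j + m * i"
proof -
  have lam: "lam > 1" using hadamard_gapD(1)[OF gap] .
  define Q where "Q = lam ^ m"
  have Q: "Q - 1 > lam / (lam - 1)"
    using Q_big lam unfolding Q_def by (simp add: field_simps)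
  have Q2: "Q > 2"
    using Q_big lam unfolding Q_def by (smt (verit) divide_pos_pos)
  obtain \<epsilon> where \<epsilon>: "\<forall>i. \<epsilon> i \<in> {-1, 0, 1}" and l_eq: "int (n l) = (\<Sum>i\<in>I. \<epsilon> i * int (n (j + m * i)))"
    using l unfolding signed_sums_def by blast
  obtain i where i: "i \<in> I" and close: "\<bar>real (n l) - real (n (j + m * i))\<bar> \<le> real (n (j + m * i)) / (Q - 1)"
    using lacunary_dominant_term[OF gap_subsequence_lacunary[OF gap] Q2[unfolded Q_def] fin \<epsilon> l_eq]
      hadamard_gapD(2)[OF gap, of l] unfolding Q_def by auto
  define \<delta> where "\<delta> = 1 / (Q - 1)"
  have "lam / (lam - 1) > 0" using lam by simp
  then have "0 < (Q - 1) * (lam / (lam - 1))" using Q by (intro mult_pos_pos) auto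
  then have "\<delta> < 1 / (lam / (lam - 1))"
    unfolding \<delta>_def using Q by (intro divide_strict_left_mono) auto
  then have \<delta>_small: "\<delta> < (lam - 1) / lam" by simp
  have "(lam - 1) * 1 < (lam - 1) * lam"
    using lam by (intro mult_strict_left_mono) auto
  then have "(lam - 1) / lam < lam - 1"
    using lam by (simp add: divide_less_eq)
  with \<delta>_small have "\<delta> < lam - 1" "\<delta> < 1 - 1 / lam"
    using lam by (simp_all add: diff_divide_distrib)
  moreover have "\<bar>real (n l) - real (n (j + m * i))\<bar> \<le> \<delta> * real (n (j + m * i))"
    using close by (simp add: \<delta>_def)
  ultimately have "l = j + m * i" by (rule gap_index_from_closeness[OF gap])
  then show ?thesis using i by blast
qed

section \<open>Hadamard gap sequences are Sidon sequences\<close>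

definition phase :: "complex \<Rightarrow> complex" where
  "phase b = (if b = 0 then 1 else sgn b)"

lemma norm_phase: "norm (phase b) = 1"
  by (simp add: phase_def norm_sgn)

lemma mult_cnj_phase: "b * cnj (phase b) = of_real (norm b)"
proof (cases "b = 0")
  case False
  have "b * cnj (phase b) = b * cnj b / of_real (norm b)"
    using False by (simp add: phase_def sgn_div_norm scaleR_conv_of_real divide_inverse)
  also have "\<dots> = of_real (norm b)"
    using False by (simp add: complex_norm_square[symmetric] power2_eq_square)
  finally show ?thesis .
qed (simp add: phase_def)

lemma exists_value_above_average:
  fixes h :: "nat \<Rightarrow> complex" and w :: "nat \<Rightarrow> real"
  assumes M: "M > 0" and w: "\<And>s. w s \<ge> 0" and total: "(\<Sum>s<M. w s) = real M"
  shows "\<exists>s<M. norm (\<Sum>s<M. h s * of_real (w s)) \<le> real M * norm (h s)"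
proof -
  define H where "H = Max ((\<lambda>s. norm (h s)) ` {..<M})"
  have "H \<in> (\<lambda>s. norm (h s)) ` {..<M}" unfolding H_def using M by (intro Max_in) auto
  then obtain s0 where s0: "s0 < M" and H: "H = norm (h s0)" by auto
  have max: "norm (h s) \<le> norm (h s0)" if "s < M" for s
    unfolding H[symmetric] H_def using that by (intro Max_ge) auto
  have "norm (\<Sum>s<M. h s * of_real (w s)) \<le> (\<Sum>s<M. norm (h s) * w s)"
    by (rule order_trans[OF norm_sum]) (simp add: norm_mult w)
  also have "\<dots> \<le> (\<Sum>s<M. norm (h s0) * w s)"
    using max w by (intro sum_mono mult_right_mono) auto
  also have "\<dots> = real M * norm (h s0)"
    by (simp add: sum_distrib_left[symmetric] total)
  finally show ?thesis using s0 by blast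
qed

lemma riesz_coeff_gap_frequency:
  assumes gap: "hadamard_gap lam n" and Q_big: "lam ^ m > 3 + 1 / (lam - 1)" and jm: "j < m"
    and fin: "finite I" and M: "int (n l) + (\<Sum>i\<in>I. int (n (j + m * i))) < int M"
  shows "riesz_coeff M (\<lambda>i. int (n (j + m * i))) \<sigma> I (int (n l)) =
           (if l mod m = j \<and> l div m \<in> I then of_nat M * cnj (\<sigma> (l div m)) / 2 else 0)"
proof -
  define \<nu> where "\<nu> = (\<lambda>i. int (n (j + m * i)))"
  have lac: "lacunary (lam ^ m) \<nu>" unfolding \<nu>_def by (rule gap_subsequence_lacunary[OF gap])
  have Q: "lam ^ m > 3" using Q_big hadamard_gapD(1)[OF gap] by (smt (verit) divide_pos_pos)
  have nonneg: "\<And>i. \<nu> i \<ge> 0" by (simp add: \<nu>_def)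
  show ?thesis
  proof (cases "l mod m = j \<and> l div m \<in> I")
    case True
    then have "\<nu> (l div m) = int (n l)" unfolding \<nu>_def by (metis mod_div_mult_eq mult.commute)
    then show ?thesis
      using riesz_coeff_frequency[OF lac Q fin, of "l div m" M \<sigma>] True M by (simp add: \<nu>_def)
  next
    case False
    have "int (n l) \<notin> signed_sums \<nu> I"
    proof
      assume "int (n l) \<in> signed_sums \<nu> I"
      then obtain i where "i \<in> I" "l = j + m * i"
        using signed_sum_of_gap_subsequence[OF gap Q_big fin] unfolding \<nu>_def by blast
      with False jm show False by simp
    qed
    moreover have "M > 0" using M sum_nonneg[of I \<nu>] nonneg by (simp add: \<nu>_def)
    ultimately have "riesz_coeff M \<nu> \<sigma> I (int (n l)) = 0"
      using riesz_coeff_off_spectrum[where \<nu>=\<nu>, OF fin nonneg] M by (simp add: \<nu>_def)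
    then show ?thesis
      unfolding if_not_P[OF False] by (simp add: \<nu>_def)
  qed
qed

text \<open>Pairing a trigonometric polynomial with the Riesz product whose phases match its coefficients on
  the class j mod m extracts the l1-norm of those coefficients.\<close>

lemma riesz_pairing_residue_class:
  fixes b :: "nat \<Rightarrow> complex"
  assumes gap: "hadamard_gap lam n" and Q_big: "lam ^ m > 3 + 1 / (lam - 1)" and jm: "j < m"
    and G: "finite G" and I: "I = (\<lambda>i. j + m * i) -` G" "finite I"
    and \<nu>: "\<nu> = (\<lambda>i. int (n (j + m * i)))" and \<sigma>: "\<sigma> = (\<lambda>i. phase (b (j + m * i)))"
    and M_big: "\<And>l. l \<in> G \<Longrightarrow> int (n l) + (\<Sum>i\<in>I. \<nu> i) < int M"
  shows "(\<Sum>s<M. (\<Sum>l\<in>G. b l * eroot M (int (n l)) s) * of_real (riesz_product M \<nu> \<sigma> I s))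
           = of_nat M / 2 * of_real (\<Sum>l\<in>{l\<in>G. l mod m = j}. norm (b l))"
proof -
  have coeff: "b l * riesz_coeff M \<nu> \<sigma> I (int (n l)) =
      (if l mod m = j then of_nat M / 2 * of_real (norm (b l)) else 0)" if "l \<in> G" for l
  proof -
    have l_eq: "j + m * (l div m) = l" if "l mod m = j" using that by (metis mod_div_mult_eq mult.commute)
    then have "l div m \<in> I" if "l mod m = j" using that \<open>l \<in> G\<close> by (simp add: I)
    moreover have "riesz_coeff M \<nu> \<sigma> I (int (n l)) =
        (if l mod m = j \<and> l div m \<in> I then of_nat M * cnj (\<sigma> (l div m)) / 2 else 0)"
      unfolding \<nu> by (rule riesz_coeff_gap_frequency[OF gap Q_big jm I(2) M_big[OF that, unfolded \<nu>]])
    moreover have "\<sigma> (l div m) = phase (b l)" if "l mod m = j"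
      using l_eq[OF that] by (simp add: \<sigma>)
    ultimately show ?thesis
      using mult_cnj_phase[of "b l"] by (cases "l mod m = j") (simp_all add: ac_simps)
  qed
  have "(\<Sum>s<M. (\<Sum>l\<in>G. b l * eroot M (int (n l)) s) * of_real (riesz_product M \<nu> \<sigma> I s))
      = (\<Sum>l\<in>G. b l * riesz_coeff M \<nu> \<sigma> I (int (n l)))"
    unfolding riesz_coeff_def by (simp add: sum_distrib_left sum_distrib_right sum.swap[of _ G] mult.assoc)
  also have "\<dots> = (\<Sum>l\<in>G. if l mod m = j then of_nat M / 2 * of_real (norm (b l)) else 0)"
    using coeff by (rule sum.cong[OF refl])
  also have "\<dots> = (\<Sum>l\<in>{l\<in>G. l mod m = j}. of_nat M / 2 * of_real (norm (b l)))"
    using G by (rule sum.inter_filter[symmetric])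
  also have "\<dots> = of_nat M / 2 * of_real (\<Sum>l\<in>{l\<in>G. l mod m = j}. norm (b l))"
    by (simp add: sum_distrib_left)
  finally show ?thesis .
qed

lemma sidon_residue_class:
  fixes b :: "nat \<Rightarrow> complex"
  assumes gap: "hadamard_gap lam n" and Q_big: "lam ^ m > 3 + 1 / (lam - 1)" and jm: "j < m"
    and G: "finite G"
  shows "\<exists>t::real. (\<Sum>l\<in>{l\<in>G. l mod m = j}. norm (b l))
            \<le> 2 * norm (\<Sum>l\<in>G. b l * exp (\<i> * of_real t) ^ n l)"
proof -
  define I where "I = (\<lambda>i. j + m * i) -` G"
  have finI: "finite I"
    unfolding I_def using G jm by (intro finite_vimageI) (auto simp: inj_def)
  define \<nu> where "\<nu> = (\<lambda>i. int (n (j + m * i)))"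
  define \<sigma> where "\<sigma> = (\<lambda>i. phase (b (j + m * i)))"
  define M where "M = Suc (nat ((\<Sum>l\<in>G. int (n l)) + (\<Sum>i\<in>I. \<nu> i)))"
  have M_pos: "M > 0" by (simp add: M_def)
  have sum_I: "(\<Sum>i\<in>I. \<nu> i) \<ge> 0" by (simp add: \<nu>_def sum_nonneg)
  have M_big: "int (n l) + (\<Sum>i\<in>I. \<nu> i) < int M" if "l \<in> G" for l
    using member_le_sum[of l G "\<lambda>l. int (n l)"] that G sum_I by (simp add: M_def)
  define w where "w = riesz_product M \<nu> \<sigma> I"
  have w_nonneg: "w s \<ge> 0" for s
    unfolding w_def by (rule riesz_product_nonneg) (simp add: \<sigma>_def norm_phase)
  have Q: "lam ^ m > 3" using Q_big hadamard_gapD(1)[OF gap] by (smt (verit) divide_pos_pos)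
  have "0 \<le> (\<Sum>l\<in>G. int (n l))" by (simp add: sum_nonneg)
  then have "(\<Sum>i\<in>I. int (n (j + m * i))) < int M" by (simp add: M_def \<nu>_def)
  then have "riesz_coeff M \<nu> \<sigma> I 0 = of_nat M"
    unfolding \<nu>_def by (rule riesz_coeff_zero[OF gap_subsequence_lacunary[OF gap] Q finI])
  then have "complex_of_real (\<Sum>s<M. w s) = complex_of_real (real M)"
    unfolding riesz_coeff_def w_def by simp
  then have w_total: "(\<Sum>s<M. w s) = real M"
    by (simp only: of_real_eq_iff)
  define h where "h = (\<lambda>s. \<Sum>l\<in>G. b l * eroot M (int (n l)) s)"
  have pairing: "(\<Sum>s<M. h s * of_real (w s))
      = of_nat M / 2 * of_real (\<Sum>l\<in>{l\<in>G. l mod m = j}. norm (b l))"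
    unfolding h_def w_def
    by (rule riesz_pairing_residue_class[OF gap Q_big jm G I_def finI \<nu>_def \<sigma>_def M_big])
  obtain s where "norm (\<Sum>s<M. h s * of_real (w s)) \<le> real M * norm (h s)"
    using exists_value_above_average[OF M_pos w_nonneg w_total] by blast
  then have "real M / 2 * (\<Sum>l\<in>{l\<in>G. l mod m = j}. norm (b l)) \<le> real M * norm (h s)"
    unfolding pairing by (simp add: norm_mult sum_nonneg del: of_real_sum)
  then have "(\<Sum>l\<in>{l\<in>G. l mod m = j}. norm (b l)) \<le> 2 * norm (h s)"
    using M_pos by (simp add: field_simps)
  then show ?thesis
    unfolding h_def eroot_eq_exp_power by blast
qed

definition sidon_constant :: "(nat \<Rightarrow> nat) \<Rightarrow> real \<Rightarrow> bool" where
  "sidon_constant n C \<longleftrightarrow> (\<forall>G (b :: nat \<Rightarrow> complex). finite G \<longrightarrow>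
     (\<exists>t::real. (\<Sum>l\<in>G. norm (b l)) \<le> C * norm (\<Sum>l\<in>G. b l * exp (\<i> * of_real t) ^ n l)))"

text \<open>Hadamard gap sequences are Sidon (summing the inequality over the m residue classes).\<close>

lemma hadamard_gap_sidon:
  assumes gap: "hadamard_gap lam n"
  shows "\<exists>C>0. sidon_constant n C"
proof -
  have lam: "lam > 1" using hadamard_gapD(1)[OF gap] .
  obtain m where m: "3 + 1 / (lam - 1) < lam ^ m" using real_arch_pow[OF lam] by blast
  have "1 / (lam - 1) > 0" using lam by simp
  then have "lam ^ m > 1" using m by linarith
  then have "m > 0" by (cases m) auto
  have "sidon_constant n (2 * real m)"
    unfolding sidon_constant_def
  proof (intro allI impI)
    fix G :: "nat set" and b :: "nat \<Rightarrow> complex" assume G: "finite G"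
    define S where "S = (\<lambda>t::real. norm (\<Sum>l\<in>G. b l * exp (\<i> * of_real t) ^ n l))"
    obtain T where T: "\<And>j. j < m \<Longrightarrow> (\<Sum>l\<in>{l\<in>G. l mod m = j}. norm (b l)) \<le> 2 * S (T j)"
      using sidon_residue_class[OF gap m _ G, of _ b] unfolding S_def by metis
    define Smax where "Smax = Max ((\<lambda>j. S (T j)) ` {..<m})"
    have "Smax \<in> (\<lambda>j. S (T j)) ` {..<m}" unfolding Smax_def using \<open>m > 0\<close> by (intro Max_in) auto
    then obtain j0 where j0_eq: "Smax = S (T j0)" by auto
    have j0: "S (T j) \<le> S (T j0)" if "j < m" for j
      unfolding j0_eq[symmetric] Smax_def using that by (intro Max_ge) auto
    have "(\<Sum>l\<in>G. norm (b l)) = (\<Sum>j<m. \<Sum>l\<in>{l\<in>G. l mod m = j}. norm (b l))"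
      using G \<open>m > 0\<close> by (intro sum.group[symmetric]) auto
    also have "\<dots> \<le> (\<Sum>j<m. 2 * S (T j0))"
      using T j0 by (intro sum_mono) force
    also have "\<dots> = 2 * real m * S (T j0)" by simp
    finally show "\<exists>t. (\<Sum>l\<in>G. norm (b l)) \<le> 2 * real m * norm (\<Sum>l\<in>G. b l * exp (\<i> * of_real t) ^ n l)"
      unfolding S_def by blast
  qed
  then show ?thesis using \<open>m > 0\<close> by (intro exI[of _ "2 * real m"]) simp
qed

section \<open>Doubling weights\<close>

definition doubling_weight :: "real \<Rightarrow> (real \<Rightarrow> real) \<Rightarrow> bool" where
  "doubling_weight B \<mu> \<longleftrightarrow> B > 0 \<and> (\<forall>r\<in>{0..<1}. \<mu> r > 0) \<and> antimono_on {0..<1} \<mu> \<and>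
     (\<forall>d\<in>{0<..1}. \<mu> (1 - d / 2) \<ge> B * \<mu> (1 - d))"

lemma doubling_weightD:
  assumes "doubling_weight B \<mu>"
  shows "B > 0" and "\<And>r. 0 \<le> r \<Longrightarrow> r < 1 \<Longrightarrow> \<mu> r > 0"
    and "\<And>r s. 0 \<le> r \<Longrightarrow> r \<le> s \<Longrightarrow> s < 1 \<Longrightarrow> \<mu> s \<le> \<mu> r"
    and "\<And>d. 0 < d \<Longrightarrow> d \<le> 1 \<Longrightarrow> \<mu> (1 - d / 2) \<ge> B * \<mu> (1 - d)"
proof -
  show "B > 0" and "\<And>r. 0 \<le> r \<Longrightarrow> r < 1 \<Longrightarrow> \<mu> r > 0"
    and "\<And>d. 0 < d \<Longrightarrow> d \<le> 1 \<Longrightarrow> \<mu> (1 - d / 2) \<ge> B * \<mu> (1 - d)"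
    using assms unfolding doubling_weight_def by auto
  have mono: "antimono_on {0..<1} \<mu>" using assms unfolding doubling_weight_def by blast
  show "\<mu> s \<le> \<mu> r" if "0 \<le> r" "r \<le> s" "s < 1" for r s
    using monotone_onD[OF mono, of r s] that by auto
qed

definition inv_weight :: "(real \<Rightarrow> real) \<Rightarrow> real \<Rightarrow> real" where
  "inv_weight \<mu> x = 1 / \<mu> (1 - 1 / x)"

lemma inv_weight_pos:
  assumes w: "doubling_weight B \<mu>" and "1 \<le> x"
  shows "inv_weight \<mu> x > 0"
  using doubling_weightD(2)[OF w] assms(2) by (simp add: inv_weight_def)

lemma inv_weight_mono:
  assumes w: "doubling_weight B \<mu>" and "1 \<le> x" "x \<le> y"
  shows "inv_weight \<mu> x \<le> inv_weight \<mu> y"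
proof -
  have "1 - 1 / x \<le> 1 - 1 / y" using assms(2,3) by (simp add: frac_le)
  then have "\<mu> (1 - 1 / y) \<le> \<mu> (1 - 1 / x)"
    using assms(2,3) by (intro doubling_weightD(3)[OF w]) auto
  then show ?thesis
    using doubling_weightD(2)[OF w] assms(2,3) by (simp add: inv_weight_def frac_le)
qed

lemma inv_weight_double:
  assumes w: "doubling_weight B \<mu>" and q: "1 / B \<le> 2 ^ q" and x: "1 \<le> x"
  shows "inv_weight \<mu> (2 * x) \<le> 2 ^ q * inv_weight \<mu> x"
proof -
  have "\<mu> (1 - (1 / x) / 2) \<ge> B * \<mu> (1 - 1 / x)"
    using x by (intro doubling_weightD(4)[OF w]) auto
  then have "B * \<mu> (1 - 1 / x) \<le> \<mu> (1 - 1 / (2 * x))" by (simp add: mult.commute)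
  moreover have "B * \<mu> (1 - 1 / x) > 0"
    using x doubling_weightD(1,2)[OF w] by simp
  ultimately have "1 / \<mu> (1 - 1 / (2 * x)) \<le> 1 / (B * \<mu> (1 - 1 / x))"
    by (intro frac_le) auto
  then have "inv_weight \<mu> (2 * x) \<le> (1 / B) * inv_weight \<mu> x"
    by (simp add: inv_weight_def)
  also have "\<dots> \<le> 2 ^ q * inv_weight \<mu> x"
    using q inv_weight_pos[OF w x] by (intro mult_right_mono) auto
  finally show ?thesis .
qed

lemma inv_weight_growth_dyadic:
  assumes w: "doubling_weight B \<mu>" and q: "1 / B \<le> 2 ^ q" and x: "1 \<le> x"
  shows "x \<le> y \<Longrightarrow> y \<le> 2 ^ j * x \<Longrightarrow> inv_weight \<mu> y \<le> (2 * y / x) ^ q * inv_weight \<mu> x"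
proof (induction j arbitrary: y)
  case 0
  then have "y = x" by simp
  then show ?case using inv_weight_pos[OF w x] x by (simp add: mult_le_cancel_right1)
next
  case (Suc j)
  show ?case
  proof (cases "y \<le> 2 * x")
    case True
    have "2 \<le> 2 * y / x" using Suc.prems x by (simp add: field_simps)
    then have "(2::real) ^ q \<le> (2 * y / x) ^ q" by (rule power_mono) simp
    then have "2 ^ q * inv_weight \<mu> x \<le> (2 * y / x) ^ q * inv_weight \<mu> x"
      using inv_weight_pos[OF w x] by (intro mult_right_mono) auto
    moreover have "inv_weight \<mu> y \<le> inv_weight \<mu> (2 * x)"
      using Suc.prems True x by (intro inv_weight_mono[OF w]) auto
    ultimately show ?thesis using inv_weight_double[OF w q x] by linarith
  next
    case False
    then have half: "x \<le> y / 2" "y / 2 \<le> 2 ^ j * x" using Suc.prems by auto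
    have "inv_weight \<mu> y = inv_weight \<mu> (2 * (y / 2))" by simp
    also have "\<dots> \<le> 2 ^ q * inv_weight \<mu> (y / 2)"
      using half x by (intro inv_weight_double[OF w q]) simp
    also have "\<dots> \<le> 2 ^ q * ((y / x) ^ q * inv_weight \<mu> x)"
      using Suc.IH[OF half] by (intro mult_left_mono) auto
    also have "\<dots> = (2 * (y / x)) ^ q * inv_weight \<mu> x"
      by (simp only: power_mult_distrib mult.assoc)
    also have "\<dots> = (2 * y / x) ^ q * inv_weight \<mu> x"
      by simp
    finally show ?thesis .
  qed
qed

lemma inv_weight_growth:
  assumes w: "doubling_weight B \<mu>" and q: "1 / B \<le> 2 ^ q" and x: "1 \<le> x" and "x \<le> y"
  shows "inv_weight \<mu> y \<le> (2 * y / x) ^ q * inv_weight \<mu> x"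
proof -
  obtain j where "y / x < 2 ^ j" using real_arch_pow[of 2 "y / x"] by auto
  then have "y \<le> 2 ^ j * x" using x by (simp add: field_simps)
  then show ?thesis by (rule inv_weight_growth_dyadic[OF w q x \<open>x \<le> y\<close>])
qed

section \<open>Necessity of the coefficient condition\<close>

lemma norm_tail_le:
  fixes f :: "nat \<Rightarrow> complex"
  assumes summable: "summable (\<lambda>k. norm (f k))"
  shows "norm ((\<Sum>k. f k) - (\<Sum>k<L. f k)) \<le> (\<Sum>k. norm (f k)) - (\<Sum>k<L. norm (f k))"
proof -
  have "norm ((\<Sum>k. f k) - (\<Sum>k<L. f k)) = norm (\<Sum>k. f (k + L))"
    using suminf_split_initial_segment[OF summable_norm_cancel[OF summable], of L] by simp
  also have "\<dots> \<le> (\<Sum>k. norm (f (k + L)))"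
    by (rule summable_norm) (rule summable_ignore_initial_segment[OF summable])
  also have "\<dots> = (\<Sum>k. norm (f k)) - (\<Sum>k<L. norm (f k))"
    using suminf_split_initial_segment[OF summable, of L] by simp
  finally show ?thesis .
qed

lemma sidon_series_bound:
  fixes c :: "nat \<Rightarrow> complex"
  assumes sidon: "sidon_constant n C" and C: "C \<ge> 0" and summable: "summable (\<lambda>k. norm (c k))"
    and bound: "\<And>t. norm (\<Sum>k. c k * exp (\<i> * of_real t) ^ n k) \<le> S"
  shows "(\<Sum>k. norm (c k)) \<le> C * S"
proof (rule LIMSEQ_le)
  define tail where "tail = (\<lambda>L. (\<Sum>k. norm (c k)) - (\<Sum>k<L. norm (c k)))"
  show "(\<lambda>L. \<Sum>k<L. norm (c k)) \<longlonglongrightarrow> (\<Sum>k. norm (c k))"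
    using summable by (simp add: summable_LIMSEQ)
  then have "tail \<longlonglongrightarrow> 0"
    unfolding tail_def by (intro tendsto_eq_intros) auto
  then show "(\<lambda>L. C * S + C * tail L) \<longlonglongrightarrow> C * S"
    by (auto intro!: tendsto_eq_intros)
  show "\<exists>L0. \<forall>L\<ge>L0. (\<Sum>k<L. norm (c k)) \<le> C * S + C * tail L"
  proof (intro exI allI impI)
    fix L :: nat
    obtain t where t: "(\<Sum>k<L. norm (c k)) \<le> C * norm (\<Sum>k<L. c k * exp (\<i> * of_real t) ^ n k)"
      using sidon[unfolded sidon_constant_def, rule_format, of "{..<L}" c] by blast
    define e where "e = (\<lambda>k. c k * exp (\<i> * of_real t) ^ n k)"
    have norm_e: "norm (e k) = norm (c k)" for k by (simp add: e_def norm_mult norm_power)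
    have "norm (\<Sum>k<L. e k) \<le> norm (\<Sum>k. e k) + norm ((\<Sum>k. e k) - (\<Sum>k<L. e k))"
      by (metis norm_minus_commute norm_triangle_sub)
    also have "\<dots> \<le> S + tail L"
    proof (rule add_mono)
      show "norm (\<Sum>k. e k) \<le> S" using bound[of t] by (simp add: e_def)
      show "norm ((\<Sum>k. e k) - (\<Sum>k<L. e k)) \<le> tail L"
        using norm_tail_le[of e L] summable unfolding norm_e tail_def by simp
    qed
    finally have "C * norm (\<Sum>k<L. e k) \<le> C * (S + tail L)" using C by (rule mult_left_mono)
    then show "(\<Sum>k<L. norm (c k)) \<le> C * S + C * tail L"
      using t unfolding e_def by (simp add: distrib_left)
  qed
qed

lemma power_radius_lower_bound:
  assumes N: "N \<ge> (2::nat)"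
  shows "(1 - 1 / real N) ^ N \<ge> exp (- 2)"
proof -
  define r where "r = 1 - 1 / real N"
  have r0: "r > 0" using N by (simp add: r_def)
  have "1 / r = 1 + 1 / (real N - 1)" using N by (simp add: r_def field_simps)
  also have "\<dots> \<le> exp (1 / (real N - 1))" by (rule exp_ge_add_one_self)
  finally have "(1 / r) ^ N \<le> exp (1 / (real N - 1)) ^ N" using r0 by (intro power_mono) auto
  also have "\<dots> = exp (real N / (real N - 1))" by (simp add: exp_of_nat_mult[symmetric])
  also have "\<dots> \<le> exp 2" using N by (simp add: field_simps)
  finally have "1 \<le> exp 2 * r ^ N" using r0 by (simp add: field_simps)
  then show ?thesis unfolding r_def[symmetric] by (simp add: exp_minus field_simps)
qed

text \<open>At radius 1 - 1/N all frequencies n k \<le> N are damped by at most a factor exp (-2).\<close>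

lemma low_frequency_sum_le:
  fixes b :: "nat \<Rightarrow> complex"
  assumes mono: "strict_mono n" and N: "N \<ge> 2"
    and summable: "summable (\<lambda>k. norm (b k) * (1 - 1 / real N) ^ n k)"
  shows "(\<Sum>k\<in>{k. n k \<le> N}. norm (b k)) \<le> exp 2 * (\<Sum>k. norm (b k) * (1 - 1 / real N) ^ n k)"
proof -
  define r where "r = 1 - 1 / real N"
  have r: "0 < r" "r < 1" using N by (auto simp: r_def)
  have "norm (b k) \<le> exp 2 * (norm (b k) * r ^ n k)" if "n k \<le> N" for k
  proof -
    have "exp (-2) \<le> r ^ N" unfolding r_def by (rule power_radius_lower_bound[OF N])
    also have "\<dots> \<le> r ^ n k" using that r by (intro power_decreasing) auto
    finally have "1 \<le> exp 2 * r ^ n k" by (simp add: exp_minus field_simps)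
    then show ?thesis using mult_left_mono[of 1 "exp 2 * r ^ n k" "norm (b k)"] by (simp add: ac_simps)
  qed
  then have "(\<Sum>k\<in>{k. n k \<le> N}. norm (b k)) \<le> (\<Sum>k\<in>{k. n k \<le> N}. exp 2 * (norm (b k) * r ^ n k))"
    by (intro sum_mono) auto
  also have "\<dots> = exp 2 * (\<Sum>k\<in>{k. n k \<le> N}. norm (b k) * r ^ n k)"
    by (simp add: sum_distrib_left)
  also have "\<dots> \<le> exp 2 * (\<Sum>k. norm (b k) * r ^ n k)"
    using summable r finite_frequencies_below[OF mono]
    by (intro mult_left_mono sum_le_suminf) (auto simp: r_def)
  finally show ?thesis unfolding r_def .
qed

text \<open>A bound \<mu>(|z|) * |\<Sum>k. b k * z ^ n k| \<le> M gives \<Sum>k. |b k| * r ^ n k \<le> Cs * M / \<mu> r, by the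
  Sidon property applied on the circle of radius r.\<close>

lemma radial_coefficient_bound:
  fixes b :: "nat \<Rightarrow> complex"
  assumes w: "doubling_weight B \<mu>" and sidon: "sidon_constant n Cs" "Cs \<ge> 0"
    and summable: "\<And>z. norm z < 1 \<Longrightarrow> summable (\<lambda>k. norm (b k * z ^ n k))"
    and bounded: "\<And>z. norm z < 1 \<Longrightarrow> \<mu> (norm z) * norm (\<Sum>k. b k * z ^ n k) \<le> M"
    and r: "0 \<le> r" "r < 1"
  shows "(\<Sum>k. norm (b k) * r ^ n k) \<le> Cs * (M / \<mu> r)"
proof -
  have "(\<Sum>k. norm (b k * of_real r ^ n k)) \<le> Cs * (M / \<mu> r)"
  proof (rule sidon_series_bound[OF sidon])
    show "summable (\<lambda>k. norm (b k * of_real r ^ n k))" using summable[of "of_real r"] r by simp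
    fix t :: real
    define z where "z = of_real r * exp (\<i> * of_real t)"
    have z: "norm z = r" using r by (simp add: z_def norm_mult)
    have "(\<lambda>k. b k * of_real r ^ n k * exp (\<i> * of_real t) ^ n k) = (\<lambda>k. b k * z ^ n k)"
      by (simp add: z_def power_mult_distrib mult.assoc)
    then show "norm (\<Sum>k. b k * of_real r ^ n k * exp (\<i> * of_real t) ^ n k) \<le> M / \<mu> r"
      using bounded[of z] z r doubling_weightD(2)[OF w, of r] by (simp add: field_simps)
  qed
  then show ?thesis using r by (simp add: norm_mult norm_power)
qed

lemma weighted_bound_from_two:
  fixes S :: "nat \<Rightarrow> real"
  assumes w: "doubling_weight B \<mu>" and X: "X \<ge> 0" and S12: "S 1 \<le> S 2"
    and large: "\<And>N. N \<ge> 2 \<Longrightarrow> S N \<le> X / \<mu> (1 - 1 / real N)"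
  shows "\<forall>N::nat. N \<ge> 1 \<longrightarrow> S N \<le> (X / B) / \<mu> (1 - 1 / real N)"
proof (intro allI impI)
  fix N :: nat assume "N \<ge> 1"
  have \<mu>0: "\<mu> 0 > 0" "\<mu> (1 / 2) > 0" using doubling_weightD(2)[OF w] by auto
  have B: "B * \<mu> 0 \<le> \<mu> (1 / 2)" using doubling_weightD(4)[OF w, of 1] by simp
  moreover have "\<mu> (1 / 2) \<le> \<mu> 0" using doubling_weightD(3)[OF w, of 0 "1 / 2"] by simp
  ultimately have "B * \<mu> 0 \<le> 1 * \<mu> 0" by simp
  then have "B \<le> 1" using \<mu>0(1) by (rule mult_right_le_imp_le)
  then have X_B: "X \<le> X / B" using X doubling_weightD(1)[OF w] by (simp add: le_divide_eq mult_left_le)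
  show "S N \<le> (X / B) / \<mu> (1 - 1 / real N)"
  proof (cases "N \<ge> 2")
    case True
    then have "X / \<mu> (1 - 1 / real N) \<le> (X / B) / \<mu> (1 - 1 / real N)"
      using X_B doubling_weightD(2)[OF w, of "1 - 1 / real N"] by (intro divide_right_mono) auto
    then show ?thesis using large[OF True] by linarith
  next
    case False
    then have "N = 1" using \<open>N \<ge> 1\<close> by simp
    have "S N \<le> X / \<mu> (1 / 2)" using S12 large[of 2] \<open>N = 1\<close> by simp
    also have "\<dots> \<le> X / (B * \<mu> 0)"
      using X B doubling_weightD(1)[OF w] \<mu>0 by (intro divide_left_mono) auto
    finally show ?thesis using \<open>N = 1\<close> by simp
  qed
qed

lemma coefficient_bound_of_bounded_gap_series:
  fixes b :: "nat \<Rightarrow> complex"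
  assumes w: "doubling_weight B \<mu>" and gap: "hadamard_gap lam n"
    and summable: "\<And>z. norm z < 1 \<Longrightarrow> summable (\<lambda>k. norm (b k * z ^ n k))"
    and bounded: "\<And>z. norm z < 1 \<Longrightarrow> \<mu> (norm z) * norm (\<Sum>k. b k * z ^ n k) \<le> M"
  shows "\<exists>C. \<forall>N::nat. N \<ge> 1 \<longrightarrow> (\<Sum>k\<in>{k. n k \<le> N}. norm (b k)) \<le> C / \<mu> (1 - 1 / real N)"
proof -
  have mono: "strict_mono n" by (rule hadamard_gap_strict_mono[OF gap])
  obtain Cs where Cs: "Cs > 0" "sidon_constant n Cs" using hadamard_gap_sidon[OF gap] by blast
  have radial: "(\<Sum>k. norm (b k) * r ^ n k) \<le> Cs * (M / \<mu> r)" if "0 \<le> r" "r < 1" for r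
    using radial_coefficient_bound[OF w Cs(2) less_imp_le[OF Cs(1)], of b M r] summable bounded that
    by blast
  define X where "X = exp 2 * Cs * M"
  have large: "(\<Sum>k\<in>{k. n k \<le> N}. norm (b k)) \<le> X / \<mu> (1 - 1 / real N)" if N: "N \<ge> 2" for N
  proof -
    define r where "r = 1 - 1 / real N"
    have r: "0 \<le> r" "r < 1" using N by (auto simp: r_def)
    have "summable (\<lambda>k. norm (b k) * r ^ n k)"
      using summable[of "of_real r"] r by (simp add: norm_mult norm_power)
    then have "(\<Sum>k\<in>{k. n k \<le> N}. norm (b k)) \<le> exp 2 * (\<Sum>k. norm (b k) * r ^ n k)"
      unfolding r_def by (rule low_frequency_sum_le[OF mono N])
    also have "\<dots> \<le> exp 2 * (Cs * (M / \<mu> r))"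
      using radial[OF r] by (intro mult_left_mono) auto
    also have "\<dots> = X / \<mu> r" by (simp add: X_def)
    finally show ?thesis unfolding r_def .
  qed
  have "(\<Sum>k. b k * 0 ^ n k) = 0"
    using hadamard_gapD(2)[OF gap] by (simp add: zero_power)
  then have "0 \<le> M" using bounded[of 0] by simp
  then have "0 \<le> X" using Cs(1) by (simp add: X_def)
  moreover have "(\<Sum>k\<in>{k. n k \<le> 1}. norm (b k)) \<le> (\<Sum>k\<in>{k. n k \<le> 2}. norm (b k))"
    using finite_frequencies_below[OF mono] by (intro sum_mono2) auto
  ultimately show ?thesis
    using weighted_bound_from_two[OF w, of X "\<lambda>N. \<Sum>k\<in>{k. n k \<le> N}. norm (b k)"] large by blast
qed

section \<open>Sufficiency of the coefficient condition\<close>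

lemma power_div_fact_le_exp:
  fixes x :: real assumes "x \<ge> 0"
  shows "x ^ k / fact k \<le> exp x"
proof -
  have "(\<Sum>i\<in>{k}. x ^ i / fact i) \<le> (\<Sum>i. x ^ i / fact i)"
    using assms summable_exp_generic[of x]
    by (intro sum_le_suminf) (auto simp: divide_inverse ac_simps)
  then show ?thesis by (simp add: exp_def divide_inverse ac_simps)
qed

lemma power_exp_decay:
  fixes x :: real assumes x: "x > 0"
  shows "(2 * x) ^ q * exp (- x / 2) \<le> (2 ^ q * 2 ^ Suc q * fact (Suc q)) / x"
proof -
  have "(x / 2) ^ Suc q / fact (Suc q) \<le> exp (x / 2)"
    using x by (intro power_div_fact_le_exp) simp
  then have "(x / 2) ^ Suc q \<le> exp (x / 2) * fact (Suc q)"
    by (simp only: pos_divide_le_eq[OF fact_gt_zero])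
  then have "(x / 2) ^ Suc q / exp (x / 2) \<le> fact (Suc q)"
    by (simp only: pos_divide_le_eq[OF exp_gt_zero] mult.commute)
  then have "2 ^ q * 2 ^ Suc q * ((x / 2) ^ Suc q / exp (x / 2)) \<le> 2 ^ q * 2 ^ Suc q * fact (Suc q)"
    by (intro mult_left_mono) auto
  moreover have "(2 * x) ^ q * exp (- x / 2) * x = 2 ^ q * 2 ^ Suc q * ((x / 2) ^ Suc q / exp (x / 2))"
    using x by (simp add: exp_minus field_simps)
  ultimately show ?thesis by (simp only: pos_le_divide_eq[OF x])
qed

lemma gap_reciprocal_sum_from:
  assumes gap: "hadamard_gap lam n"
  shows "(\<Sum>k\<in>{j..<j + L}. 1 / real (n k)) \<le> lam / (lam - 1) / real (n j)"
proof (induction L arbitrary: j)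
  have lam: "lam > 1" and pos: "\<And>k. n k > 0" using hadamard_gapD[OF gap] by auto
  case 0 then show ?case using lam pos[of j] by simp
next
  case (Suc L)
  have lam: "lam > 1" and pos: "\<And>k. n k > 0" using hadamard_gapD[OF gap] by auto
  have "{j..<j + Suc L} = insert j {Suc j..<Suc j + L}" by auto
  then have "(\<Sum>k\<in>{j..<j + Suc L}. 1 / real (n k))
      = 1 / real (n j) + (\<Sum>k\<in>{Suc j..<Suc j + L}. 1 / real (n k))" by simp
  also have "\<dots> \<le> 1 / real (n j) + lam / (lam - 1) / real (n (Suc j))" using Suc[of "Suc j"] by simp
  also have "\<dots> \<le> 1 / real (n j) + lam / (lam - 1) / (lam * real (n j))"
    using lam pos[of j] pos[of "Suc j"] hadamard_gapD(3)[OF gap, of j]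
    by (intro add_left_mono divide_left_mono) auto
  also have "\<dots> = lam / (lam - 1) / real (n j)" using lam pos[of j] by (simp add: field_simps)
  finally show ?case .
qed

lemma gap_reciprocal_sum_above:
  assumes gap: "hadamard_gap lam n" and X: "X > 0"
  shows "(\<Sum>k\<in>{k. k < L \<and> real (n k) > X}. 1 / real (n k)) \<le> lam / (lam - 1) / X"
proof (cases "{k. k < L \<and> real (n k) > X} = {}")
  case True
  show ?thesis unfolding True using X hadamard_gapD(1)[OF gap] by simp
next
  case False
  define H where "H = {k. k < L \<and> real (n k) > X}"
  define k0 where "k0 = Min H"
  have fin: "finite H" by (simp add: H_def)
  have k0: "k0 \<in> H" unfolding k0_def using fin False by (intro Min_in) (auto simp: H_def)
  have "H \<subseteq> {k0..<L}" using Min_le[OF fin] unfolding k0_def H_def by auto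
  moreover have "L = k0 + (L - k0)" using k0 by (simp add: H_def)
  ultimately have "(\<Sum>k\<in>H. 1 / real (n k)) \<le> (\<Sum>k\<in>{k0..<k0 + (L - k0)}. 1 / real (n k))"
    by (intro sum_mono2) auto
  also have "\<dots> \<le> lam / (lam - 1) / real (n k0)" by (rule gap_reciprocal_sum_from[OF gap])
  also have "\<dots> \<le> lam / (lam - 1) / X"
    using k0 X hadamard_gapD(1)[OF gap] unfolding H_def by (intro divide_left_mono) auto
  finally show ?thesis unfolding H_def .
qed

lemma radius_index:
  fixes r :: real
  assumes r: "1 / 2 \<le> r" "r < 1"
  obtains N0 :: nat where "N0 \<ge> 2" "real N0 \<le> 1 / (1 - r)" "1 / (2 * real N0) \<le> 1 - r"
proof
  define N0 where "N0 = nat \<lfloor>1 / (1 - r)\<rfloor>"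
  have "1 / (1 - r) \<ge> 2" using r by (simp add: field_simps)
  then have floor2: "(2::int) \<le> \<lfloor>1 / (1 - r)\<rfloor>" by (simp add: le_floor_iff)
  then have "0 \<le> \<lfloor>1 / (1 - r)\<rfloor>" by linarith
  then have N0_eq: "real N0 = of_int \<lfloor>1 / (1 - r)\<rfloor>" unfolding N0_def by (simp only: of_nat_nat)
  show "N0 \<ge> 2" using floor2 unfolding N0_def by linarith
  show "real N0 \<le> 1 / (1 - r)" unfolding N0_eq by (rule of_int_floor_le)
  have "1 / (1 - r) < real N0 + 1" unfolding N0_eq by (rule real_of_int_floor_add_one_gt)
  also have "\<dots> \<le> 2 * real N0" using floor2 N0_eq by simp
  finally have "1 / (1 - r) < 2 * real N0" .
  moreover have "0 < real N0" using floor2 N0_eq by simp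
  ultimately show "1 / (2 * real N0) \<le> 1 - r" using r by (simp add: field_simps)
qed

lemma high_frequency_term_bound:
  assumes w: "doubling_weight B \<mu>" and q: "1 / B \<le> 2 ^ q"
    and C: "C \<ge> 0" and p: "0 \<le> p" "p \<le> C * inv_weight \<mu> (real m)"
    and X: "X \<ge> 1" "real m > X"
    and r: "1 / 2 \<le> r" "r < 1" "1 / (2 * X) \<le> 1 - r"
  shows "p * r ^ (m - 1) \<le> (2 * C * (2 ^ q * 2 ^ Suc q * fact (Suc q)) * inv_weight \<mu> X * X) / real m"
proof -
  define x where "x = real m / X"
  have x: "x > 1" using X by (simp add: x_def)
  have iw: "inv_weight \<mu> X \<ge> 0" using inv_weight_pos[OF w X(1)] by simp
  have "p \<le> C * ((2 * x) ^ q * inv_weight \<mu> X)"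
    using p(2) inv_weight_growth[OF w q X(1), of "real m"] X C
    by (simp add: x_def order_trans mult_left_mono)
  moreover have "r ^ (m - 1) \<le> 2 * exp (- x / 2)"
  proof -
    have "r \<le> exp (- (1 - r))" using exp_ge_add_one_self[of "- (1 - r)"] by simp
    then have "r ^ m \<le> exp (- (1 - r)) ^ m" using r by (intro power_mono) auto
    also have "\<dots> = exp (- (1 - r) * real m)" by (simp add: exp_of_nat_mult[symmetric] mult.commute)
    also have "\<dots> \<le> exp (- x / 2)"
    proof -
      have "x / 2 = real m * (1 / (2 * X))" unfolding x_def by simp
      also have "\<dots> \<le> real m * (1 - r)" using r by (intro mult_left_mono) auto
      finally have "- (1 - r) * real m \<le> - x / 2" by (simp add: algebra_simps)
      then show ?thesis by simp
    qed
    finally have "r ^ m \<le> exp (- x / 2)" .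
    have "m > 0" using X by simp
    then have "r ^ (m - 1) = r ^ m / r" using r by (simp add: power_eq_if)
    also have "\<dots> \<le> 2 * r ^ m" using r by (simp add: field_simps)
    finally show ?thesis using \<open>r ^ m \<le> exp (- x / 2)\<close> by simp
  qed
  ultimately have "p * r ^ (m - 1) \<le> C * ((2 * x) ^ q * inv_weight \<mu> X) * (2 * exp (- x / 2))"
    using p(1) r by (intro mult_mono) auto
  also have "\<dots> = 2 * C * inv_weight \<mu> X * ((2 * x) ^ q * exp (- x / 2))" by (simp add: algebra_simps)
  also have "\<dots> \<le> 2 * C * inv_weight \<mu> X * ((2 ^ q * 2 ^ Suc q * fact (Suc q)) / x)"
    using power_exp_decay[of x q] x C iw by (intro mult_left_mono) auto
  also have "\<dots> = (2 * C * (2 ^ q * 2 ^ Suc q * fact (Suc q)) * inv_weight \<mu> X * X) / real m"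
    using X by (simp add: x_def field_simps)
  finally show ?thesis .
qed

lemma high_frequency_sum_bound:
  fixes p :: "nat \<Rightarrow> real"
  assumes w: "doubling_weight B \<mu>" and gap: "hadamard_gap lam n" and q: "1 / B \<le> 2 ^ q"
    and C: "C \<ge> 0" and p: "\<And>k. p k \<ge> 0"
    and coeff: "\<And>N::nat. N \<ge> 1 \<Longrightarrow> (\<Sum>k\<in>{k. n k \<le> N}. p k) \<le> C * inv_weight \<mu> (real N)"
    and N0: "N0 \<ge> 2" and r: "1 / 2 \<le> r" "r < 1" "1 / (2 * real N0) \<le> 1 - r"
  shows "(\<Sum>k\<in>{k. k < L \<and> real (n k) > real N0}. p k * r ^ (n k - 1))
           \<le> 2 * C * (2 ^ q * 2 ^ Suc q * fact (Suc q)) * (lam / (lam - 1)) * inv_weight \<mu> (real N0)"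
proof -
  define A where "A = 2 ^ q * 2 ^ Suc q * (fact (Suc q) :: real)"
  define \<phi> where "\<phi> = inv_weight \<mu> (real N0)"
  have \<phi>: "\<phi> \<ge> 0" using inv_weight_pos[OF w, of "real N0"] N0 by (simp add: \<phi>_def)
  define high where "high = {k. k < L \<and> real (n k) > real N0}"
  have "(\<Sum>k\<in>high. p k * r ^ (n k - 1)) \<le> (\<Sum>k\<in>high. (2 * C * A * \<phi> * real N0) * (1 / real (n k)))"
  proof (rule sum_mono)
    fix k assume "k \<in> high"
    then have nk: "real (n k) > real N0" by (simp add: high_def)
    have "p k \<le> (\<Sum>k'\<in>{k'. n k' \<le> n k}. p k')"
      using finite_frequencies_below[OF hadamard_gap_strict_mono[OF gap]] p by (intro member_le_sum) auto
    also have "\<dots> \<le> C * inv_weight \<mu> (real (n k))" using coeff hadamard_gapD(2)[OF gap, of k] by simp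
    finally have "p k \<le> C * inv_weight \<mu> (real (n k))" .
    from high_frequency_term_bound[OF w q C p this _ nk r] N0
    show "p k * r ^ (n k - 1) \<le> (2 * C * A * \<phi> * real N0) * (1 / real (n k))"
      by (simp add: A_def \<phi>_def)
  qed
  also have "\<dots> = (2 * C * A * \<phi> * real N0) * (\<Sum>k\<in>high. 1 / real (n k))"
    by (simp add: sum_distrib_left)
  also have "\<dots> \<le> (2 * C * A * \<phi> * real N0) * (lam / (lam - 1) / real N0)"
    using gap_reciprocal_sum_above[OF gap, of "real N0" L] C \<phi> N0 unfolding high_def
    by (intro mult_left_mono) (auto simp: A_def)
  also have "\<dots> = 2 * C * A * (lam / (lam - 1)) * \<phi>" using N0 by simp
  finally show ?thesis unfolding high_def A_def \<phi>_def .
qed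

text \<open>Splitting the series \<Sum> p k * r ^ (n k - 1) at the scale N0: low frequencies are controlled by
  the hypothesis directly, high frequencies by the geometric decay of r ^ n k.\<close>

lemma radial_partial_sum_bound:
  fixes p :: "nat \<Rightarrow> real"
  assumes w: "doubling_weight B \<mu>" and gap: "hadamard_gap lam n" and q: "1 / B \<le> 2 ^ q"
    and C: "C \<ge> 0" and p: "\<And>k. p k \<ge> 0"
    and coeff: "\<And>N::nat. N \<ge> 1 \<Longrightarrow> (\<Sum>k\<in>{k. n k \<le> N}. p k) \<le> C * inv_weight \<mu> (real N)"
    and N0: "N0 \<ge> 2" and r: "1 / 2 \<le> r" "r < 1" "1 / (2 * real N0) \<le> 1 - r"
  shows "(\<Sum>k<L. p k * r ^ (n k - 1))
           \<le> (C + 2 * C * (2 ^ q * 2 ^ Suc q * fact (Suc q)) * (lam / (lam - 1))) * inv_weight \<mu> (real N0)"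
proof -
  define low where "low = {k. k < L \<and> n k \<le> N0}"
  define high where "high = {k. k < L \<and> real (n k) > real N0}"
  have "{..<L} = low \<union> high" and "low \<inter> high = {}" unfolding low_def high_def by auto
  then have split: "(\<Sum>k<L. p k * r ^ (n k - 1))
      = (\<Sum>k\<in>low. p k * r ^ (n k - 1)) + (\<Sum>k\<in>high. p k * r ^ (n k - 1))"
    by (simp add: sum.union_disjoint low_def high_def)
  have "(\<Sum>k\<in>low. p k * r ^ (n k - 1)) \<le> (\<Sum>k\<in>low. p k)"
    using p r by (intro sum_mono) (simp add: mult_left_le power_le_one)
  also have "\<dots> \<le> (\<Sum>k\<in>{k. n k \<le> N0}. p k)"
    using finite_frequencies_below[OF hadamard_gap_strict_mono[OF gap]] p
    unfolding low_def by (intro sum_mono2) auto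
  also have "\<dots> \<le> C * inv_weight \<mu> (real N0)" using coeff N0 by simp
  finally show ?thesis
    using split high_frequency_sum_bound[OF w gap q C p coeff N0 r, of L]
    unfolding high_def by (simp add: algebra_simps)
qed

lemma radial_bound_near_boundary:
  fixes p :: "nat \<Rightarrow> real"
  assumes w: "doubling_weight B \<mu>" and gap: "hadamard_gap lam n" and p: "\<And>k. p k \<ge> 0"
    and coeff: "\<And>N::nat. N \<ge> 1 \<Longrightarrow> (\<Sum>k\<in>{k. n k \<le> N}. p k) \<le> C / \<mu> (1 - 1 / real N)"
    and summable: "\<And>r. 0 \<le> r \<Longrightarrow> r < 1 \<Longrightarrow> summable (\<lambda>k. p k * r ^ (n k - 1))"
  shows "\<exists>K. \<forall>r. 1 / 2 \<le> r \<and> r < 1 \<longrightarrow> (\<Sum>k. p k * r ^ (n k - 1)) \<le> K / \<mu> r"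
proof -
  have coeff': "(\<Sum>k\<in>{k. n k \<le> N}. p k) \<le> C * inv_weight \<mu> (real N)" if "N \<ge> 1" for N
    using coeff[OF that] by (simp add: inv_weight_def)
  have "0 \<le> C / \<mu> (1 - 1 / real (1::nat))"
    using order_trans[OF sum_nonneg coeff[of 1]] p by simp
  then have C: "C \<ge> 0"
    using doubling_weightD(2)[OF w, of 0] by (simp add: zero_le_divide_iff)
  obtain q where q: "1 / B < 2 ^ q" using real_arch_pow[of 2 "1 / B"] by auto
  define K where "K = C + 2 * C * (2 ^ q * 2 ^ Suc q * fact (Suc q)) * (lam / (lam - 1))"
  have K: "K \<ge> 0" using C hadamard_gapD(1)[OF gap] by (simp add: K_def)
  show ?thesis
  proof (intro exI allI impI)
    fix r :: real assume r: "1 / 2 \<le> r \<and> r < 1"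
    obtain N0 where N0: "N0 \<ge> 2" "real N0 \<le> 1 / (1 - r)" "1 / (2 * real N0) \<le> 1 - r"
      using radius_index[of r] r by blast
    have "inv_weight \<mu> (real N0) \<le> inv_weight \<mu> (1 / (1 - r))"
      using N0 by (intro inv_weight_mono[OF w]) auto
    then have \<phi>: "inv_weight \<mu> (real N0) \<le> 1 / \<mu> r" by (simp add: inv_weight_def)
    have "(\<Sum>k. p k * r ^ (n k - 1)) \<le> K * inv_weight \<mu> (real N0)"
      using radial_partial_sum_bound[OF w gap less_imp_le[OF q] C p coeff' N0(1) _ _ N0(3)] r
      by (intro suminf_le_const summable) (auto simp: K_def)
    also have "\<dots> \<le> K * (1 / \<mu> r)" using \<phi> K by (rule mult_left_mono)
    finally show "(\<Sum>k. p k * r ^ (n k - 1)) \<le> K / \<mu> r" by simp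
  qed
qed

lemma weighted_radial_bound:
  fixes T :: "real \<Rightarrow> real"
  assumes w: "doubling_weight B \<mu>"
    and near: "\<And>r. 1 / 2 \<le> r \<Longrightarrow> r < 1 \<Longrightarrow> T r \<le> K / \<mu> r"
    and mono: "\<And>r s. 0 \<le> r \<Longrightarrow> r \<le> s \<Longrightarrow> s < 1 \<Longrightarrow> T r \<le> T s"
    and nonneg: "\<And>r. 0 \<le> r \<Longrightarrow> r < 1 \<Longrightarrow> T r \<ge> 0"
  shows "\<exists>M. \<forall>r. 0 \<le> r \<and> r < 1 \<longrightarrow> \<mu> r * T r \<le> M"
proof (intro exI allI impI)
  fix r :: real assume r: "0 \<le> r \<and> r < 1"
  have \<mu>r: "\<mu> r > 0" using doubling_weightD(2)[OF w] r by simp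
  show "\<mu> r * T r \<le> max K (\<mu> 0 * (K / \<mu> (1 / 2)))"
  proof (cases "r \<ge> 1 / 2")
    case True
    have "\<mu> r * T r \<le> \<mu> r * (K / \<mu> r)" using near[OF True] r \<mu>r by (intro mult_left_mono) auto
    then show ?thesis using \<mu>r by simp
  next
    case False
    have "\<mu> r * T r \<le> \<mu> 0 * T (1 / 2)"
      using mono[of r "1 / 2"] nonneg r False doubling_weightD(3)[OF w, of 0 r] \<mu>r
      by (intro mult_mono) auto
    also have "\<dots> \<le> \<mu> 0 * (K / \<mu> (1 / 2))"
      using near[of "1 / 2"] doubling_weightD(2)[OF w, of 0] by (intro mult_left_mono) auto
    finally show ?thesis by simp
  qed
qed

lemma bloch_bound_of_coefficient_bound:
  fixes a :: "nat \<Rightarrow> complex"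
  assumes w: "doubling_weight B \<mu>" and gap: "hadamard_gap lam n"
    and summable: "\<And>z. norm z < 1 \<Longrightarrow> summable (\<lambda>k. norm (of_nat (n k) * a k * z ^ (n k - 1)))"
    and coeff: "\<forall>N::nat. N \<ge> 1 \<longrightarrow>
        (\<Sum>k\<in>{k. n k \<le> N}. real (n k) * norm (a k)) \<le> C / \<mu> (1 - 1 / real N)"
  shows "\<exists>M. \<forall>z. norm z < 1 \<longrightarrow> \<mu> (norm z) * norm (\<Sum>k. of_nat (n k) * a k * z ^ (n k - 1)) \<le> M"
proof -
  define p where "p = (\<lambda>k. real (n k) * norm (a k))"
  define T where "T = (\<lambda>r. \<Sum>k. p k * r ^ (n k - 1))"
  have norm_term: "norm (of_nat (n k) * a k * z ^ (n k - 1)) = p k * norm z ^ (n k - 1)" for k z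
    by (simp add: p_def norm_mult norm_power)
  have p_summable: "summable (\<lambda>k. p k * r ^ (n k - 1))" if "0 \<le> r" "r < 1" for r
    using summable[of "of_real r"] that unfolding norm_term by simp
  obtain K where "\<forall>r. 1 / 2 \<le> r \<and> r < 1 \<longrightarrow> T r \<le> K / \<mu> r"
    using radial_bound_near_boundary[OF w gap _ _ p_summable, of C] coeff
    unfolding T_def p_def by fastforce
  moreover have "T r \<le> T s" if "0 \<le> r" "r \<le> s" "s < 1" for r s
    unfolding T_def using that p_summable
    by (intro suminf_le mult_left_mono power_mono) (auto simp: p_def)
  moreover have "T r \<ge> 0" if "0 \<le> r" "r < 1" for r
    unfolding T_def using that p_summable by (intro suminf_nonneg) (auto simp: p_def)
  ultimately obtain M where M: "\<And>r. 0 \<le> r \<Longrightarrow> r < 1 \<Longrightarrow> \<mu> r * T r \<le> M"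
    using weighted_radial_bound[OF w, of T K] by blast
  show ?thesis
  proof (intro exI allI impI)
    fix z :: complex assume z: "norm z < 1"
    have "norm (\<Sum>k. of_nat (n k) * a k * z ^ (n k - 1)) \<le> T (norm z)"
      using summable_norm[OF summable[OF z]] unfolding norm_term T_def .
    then have "\<mu> (norm z) * norm (\<Sum>k. of_nat (n k) * a k * z ^ (n k - 1)) \<le> \<mu> (norm z) * T (norm z)"
      using doubling_weightD(2)[OF w, of "norm z"] z by (intro mult_left_mono) auto
    also have "\<dots> \<le> M" using M z by simp
    finally show "\<mu> (norm z) * norm (\<Sum>k. of_nat (n k) * a k * z ^ (n k - 1)) \<le> M" .
  qed
qed

text \<open>Necessity: a bound on \<mu>(|z|) * |u'(z)| gives the coefficient condition, applied to z * u'(z).\<close>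

lemma coefficient_bound_of_bloch_bound:
  fixes a :: "nat \<Rightarrow> complex"
  assumes w: "doubling_weight B \<mu>" and gap: "hadamard_gap lam n"
    and summable: "\<And>z. norm z < 1 \<Longrightarrow> summable (\<lambda>k. norm (of_nat (n k) * a k * z ^ (n k - 1)))"
    and bounded: "\<forall>z. norm z < 1 \<longrightarrow> \<mu> (norm z) * norm (\<Sum>k. of_nat (n k) * a k * z ^ (n k - 1)) \<le> M"
  shows "\<exists>C. \<forall>N::nat. N \<ge> 1 \<longrightarrow>
           (\<Sum>k\<in>{k. n k \<le> N}. real (n k) * norm (a k)) \<le> C / \<mu> (1 - 1 / real N)"
proof -
  define b where "b = (\<lambda>k. of_nat (n k) * a k)"
  have shift: "b k * z ^ n k = z * (of_nat (n k) * a k * z ^ (n k - 1))" for k z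
    using hadamard_gapD(2)[OF gap, of k] unfolding b_def by (cases "n k") auto
  have "\<exists>C. \<forall>N::nat. N \<ge> 1 \<longrightarrow> (\<Sum>k\<in>{k. n k \<le> N}. norm (b k)) \<le> C / \<mu> (1 - 1 / real N)"
  proof (rule coefficient_bound_of_bounded_gap_series[OF w gap])
    fix z :: complex assume z: "norm z < 1"
    show "summable (\<lambda>k. norm (b k * z ^ n k))"
      unfolding shift norm_mult[of z] by (rule summable_mult[OF summable[OF z]])
    have "(\<Sum>k. b k * z ^ n k) = z * (\<Sum>k. of_nat (n k) * a k * z ^ (n k - 1))"
      unfolding shift by (rule suminf_mult[OF summable_norm_cancel[OF summable[OF z]]])
    then have "\<mu> (norm z) * norm (\<Sum>k. b k * z ^ n k)
        = norm z * (\<mu> (norm z) * norm (\<Sum>k. of_nat (n k) * a k * z ^ (n k - 1)))"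
      by (simp add: norm_mult)
    also have "\<dots> \<le> 1 * M"
      using bounded z doubling_weightD(2)[OF w, of "norm z"]
      by (intro mult_mono) (auto intro: mult_nonneg_nonneg order_trans)
    finally show "\<mu> (norm z) * norm (\<Sum>k. b k * z ^ n k) \<le> M" by simp
  qed
  then show ?thesis by (simp add: b_def norm_mult)
qed

theorem corollary6:
  fixes \<mu> :: "real \<Rightarrow> real" and B lam :: real
    and n :: "nat \<Rightarrow> nat" and a :: "nat \<Rightarrow> complex" and u :: "complex \<Rightarrow> real"
  assumes mu_pos: "\<forall>r\<in>{0..<1}. \<mu> r > 0"
    and mu_decr: "antimono_on {0..<1} \<mu>"
    and mu_cont: "continuous_on {0..<1} \<mu>"
    and mu_lim: "(\<mu> \<longlongrightarrow> 0) (at_left 1)"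
    and B_pos: "B > 0"
    and mu_doubling: "\<forall>d\<in>{0<..1}. \<mu> (1 - d / 2) \<ge> B * \<mu> (1 - d)"
    and n_pos: "\<forall>k. n k > 0"
    and lam_gt1: "lam > 1"
    and gap: "\<forall>k. real (n (Suc k)) \<ge> lam * real (n k)"
    and conv: "\<forall>z. norm z < 1 \<longrightarrow> summable (\<lambda>k. a k * z ^ n k)"
    and u_def: "\<forall>z. u z = Re (\<Sum>k. a k * z ^ n k)"
  shows "bloch_type \<mu> u \<longleftrightarrow>
    (\<exists>C. \<forall>N::nat. N \<ge> 1 \<longrightarrow>
        (\<Sum>k\<in>{k. n k \<le> N}. real (n k) * norm (a k)) \<le> C / \<mu> (1 - 1 / real N))"
proof -
  have w: "doubling_weight B \<mu>"
    using mu_pos mu_decr B_pos mu_doubling by (simp add: doubling_weight_def)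
  have hg: "hadamard_gap lam n"
    using lam_gt1 n_pos gap by (simp add: hadamard_gap_def)
  have mono: "strict_mono n" by (rule hadamard_gap_strict_mono[OF hg])
  have conv': "\<And>z. norm z < 1 \<Longrightarrow> summable (\<lambda>k. a k * z ^ n k)" using conv by blast
  have u: "\<And>z. u z = Re (\<Sum>k. a k * z ^ n k)" using u_def by blast
  have deriv_summable: "\<And>z. norm z < 1 \<Longrightarrow> summable (\<lambda>k. norm (of_nat (n k) * a k * z ^ (n k - 1)))"
    using gap_series_derivative_summable[OF mono hadamard_gapD(2)[OF hg] conv'] by blast
  have "bloch_type \<mu> u \<longleftrightarrow>
      (\<exists>M. \<forall>z. norm z < 1 \<longrightarrow> \<mu> (norm z) * norm (\<Sum>k. of_nat (n k) * a k * z ^ (n k - 1)) \<le> M)"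
    by (rule bloch_type_gap_series_iff[OF mono hadamard_gapD(2)[OF hg] conv' u])
  also have "\<dots> \<longleftrightarrow> (\<exists>C. \<forall>N::nat. N \<ge> 1 \<longrightarrow>
      (\<Sum>k\<in>{k. n k \<le> N}. real (n k) * norm (a k)) \<le> C / \<mu> (1 - 1 / real N))"
    using coefficient_bound_of_bloch_bound[OF w hg deriv_summable]
      bloch_bound_of_coefficient_bound[OF w hg deriv_summable] by blast
  finally show ?thesis .
qed

end
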